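(* Let $\pi=(d_0,\ldots,d_{n-1})$ and $\pi'=(d'_0,\ldots,d'_{n'-1})$ be two distinct tree sequences, each written in non-increasing order, with $n\le n'$ and $\sum_{i=0}^{j} d_i\le\sum_{i=0}^{j} d'_i$ for all $j=0,\ldots,n-1$ (written $\pi\lhd\pi'$). Let $G$ be an extremal tree in $\mathcal{T}_\pi$ and $G'$ an extremal tree in $\mathcal{T}_{\pi'}$. Then $\lambda(G)<\lambda(G')$.
   Context: For a graph $G=(V,E)$ the Laplacian is $L(G)=D(G)-A(G)$, where $A(G)$ is the adjacency matrix and $D(G)$ the diagonal matrix of vertex degrees. $\lambda(G)$ denotes the largest eigenvalue of $L(G)$. A tree sequence is the degree sequence of some tree; $\mathcal{T}_\pi$ is the set of all trees with degree sequence $\pi$. A tree in $\mathcal{T}_\pi$ is extremal if it has the largest value of $\lambda$ among all trees in $\mathcal{T}_\pi$. *)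

theory Defs
  imports "Jordan_Normal_Form.Char_Poly"
begin

definition is_graph :: "nat \<Rightarrow> nat set set \<Rightarrow> bool" where
  "is_graph n E \<longleftrightarrow> (\<forall>e\<in>E. card e = 2 \<and> e \<subseteq> {..<n})"

definition adj :: "nat set set \<Rightarrow> nat \<Rightarrow> nat \<Rightarrow> bool" where
  "adj E u v \<longleftrightarrow> {u, v} \<in> E"

definition connected_graph :: "nat \<Rightarrow> nat set set \<Rightarrow> bool" where
  "connected_graph n E \<longleftrightarrow> (\<forall>u<n. \<forall>v<n. (adj E)\<^sup>*\<^sup>* u v)"

definition is_tree :: "nat \<Rightarrow> nat set set \<Rightarrow> bool" where
  "is_tree n E \<longleftrightarrow> is_graph n E \<and> n \<ge> 1 \<and> connected_graph n E \<and> card E = n - 1"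

definition deg :: "nat set set \<Rightarrow> nat \<Rightarrow> nat" where
  "deg E v = card {e \<in> E. v \<in> e}"

definition degree_seq :: "nat \<Rightarrow> nat set set \<Rightarrow> nat list" where
  "degree_seq n E = rev (sort (map (deg E) [0..<n]))"

definition tree_sequence :: "nat list \<Rightarrow> bool" where
  "tree_sequence \<pi> \<longleftrightarrow> (\<exists>E. is_tree (length \<pi>) E \<and> degree_seq (length \<pi>) E = \<pi>)"

definition trees_with_seq :: "nat list \<Rightarrow> nat set set set" where
  "trees_with_seq \<pi> = {E. is_tree (length \<pi>) E \<and> degree_seq (length \<pi>) E = \<pi>}"

definition laplacian :: "nat \<Rightarrow> nat set set \<Rightarrow> real mat" where
  "laplacian n E = mat n n (\<lambda>(i, j). real (if i = j then deg E i else 0)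
                                     - (if adj E i j then 1 else 0))"

definition lambda_max :: "nat \<Rightarrow> nat set set \<Rightarrow> real" where
  "lambda_max n E = Max {\<mu>. eigenvalue (laplacian n E) \<mu>}"

definition extremal :: "nat list \<Rightarrow> nat set set \<Rightarrow> bool" where
  "extremal \<pi> E \<longleftrightarrow> E \<in> trees_with_seq \<pi> \<and>
     (\<forall>H \<in> trees_with_seq \<pi>. lambda_max (length \<pi>) H \<le> lambda_max (length \<pi>) E)"

definition majorized :: "nat list \<Rightarrow> nat list \<Rightarrow> bool" where
  "majorized \<pi> \<pi>' \<longleftrightarrow> length \<pi> \<le> length \<pi>' \<and>
     (\<forall>j < length \<pi>. (\<Sum>i\<le>j. \<pi> ! i) \<le> (\<Sum>i\<le>j. \<pi>' ! i))"

end

theory Submission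
  imports Defs
begin

(* 1. Trees on an arbitrary finite vertex set: leaves, induction by leaf removal,
      2-colourability, and the fact that every edge is a bridge.
   2. Variational description of lambda: for a tree on {..<n}, lambda_max is the
      maximum of the signless form qform E x = \<Sum>{u,v}\<in>E. (x u + x v)^2 on unit
      vectors (the Laplacian is similar to the signless Laplacian because trees are
      bipartite), and it is attained at a positive eigenvector p.
   3. Edge rotations: replacing an edge {b,w} by {a,w} with p a \<ge> p b keeps a tree
      and does not decrease qform E p; iterated, it moves degree from b to a.
   4. Two elementary operations strictly increase lambda: moving one unit of degree
      from v to u when 2 \<le> deg v \<le> deg u (transfer_step) and attaching a pendant
      vertex (pendant_step); strictness follows from the first-order condition
      at the Perron vector.
   5. Combinatorics: if \<pi> \<lhd> \<pi>', \<pi> \<noteq> \<pi>', one of these operations yields a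
      sequence that is still \<lhd> \<pi>' and strictly closer to \<pi>'.
   Theorem 2 follows by well-founded induction on the distance to \<pi>', measured
   lexicographically by the length difference and the total gap of prefix sums. *)

section \<open>Trees on an arbitrary vertex set\<close>

definition tree_on :: "nat set \<Rightarrow> nat set set \<Rightarrow> bool" where
  "tree_on V E \<longleftrightarrow> finite V \<and> V \<noteq> {} \<and> (\<forall>e\<in>E. card e = 2 \<and> e \<subseteq> V) \<and>
     (\<forall>u\<in>V. \<forall>v\<in>V. (adj E)\<^sup>*\<^sup>* u v) \<and> card E = card V - 1"

lemma is_tree_iff: "is_tree n E \<longleftrightarrow> tree_on {..<n} E"
  unfolding is_tree_def tree_on_def is_graph_def connected_graph_def
  by (auto simp: lessThan_empty_iff)

lemma tree_on_edges:
  assumes "tree_on V E"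
  shows "finite E" and "\<forall>e\<in>E. card e = 2 \<and> e \<subseteq> V" and "\<forall>e\<in>E. finite e"
proof -
  have "E \<subseteq> Pow V" "finite V" using assms unfolding tree_on_def by auto
  then show "finite E" by (meson finite_Pow_iff finite_subset)
  show ed: "\<forall>e\<in>E. card e = 2 \<and> e \<subseteq> V" using assms unfolding tree_on_def by blast
  then show "\<forall>e\<in>E. finite e" by (auto intro: card_ge_0_finite)
qed

lemma card2_pair: "card e = 2 \<Longrightarrow> \<exists>x y. e = {x, y} \<and> x \<noteq> y"
  by (simp add: card_2_iff)

lemma adj_sym: "adj E u v = adj E v u"
  unfolding adj_def by (simp add: insert_commute)

lemma reach_sym: "(adj E)\<^sup>*\<^sup>* u v \<Longrightarrow> (adj E)\<^sup>*\<^sup>* v u"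
proof (induction rule: rtranclp_induct)
  case base then show ?case by simp
next
  case (step y z)
  then have "adj E z y" using adj_sym by metis
  then show ?case using step(3) by (meson converse_rtranclp_into_rtranclp)
qed

lemma reach_mono: assumes "F \<subseteq> F'" "(adj F)\<^sup>*\<^sup>* u v" shows "(adj F')\<^sup>*\<^sup>* u v"
  using assms(2)
proof (induction rule: rtranclp_induct)
  case base then show ?case by simp
next
  case (step y z)
  then have "adj F' y z" using assms(1) unfolding adj_def by auto
  then show ?case using step by (meson rtranclp.rtrancl_into_rtrancl)
qed

lemma reach_trans: "(adj E)\<^sup>*\<^sup>* x y \<Longrightarrow> (adj E)\<^sup>*\<^sup>* y z \<Longrightarrow> (adj E)\<^sup>*\<^sup>* x z"
  by (rule rtranclp_trans)

lemma reach_edge: "{x, y} \<in> F \<Longrightarrow> (adj F)\<^sup>*\<^sup>* x y"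
  unfolding adj_def by (simp add: r_into_rtranclp)

lemma sum_deg:
  assumes "finite V" "finite E" "\<forall>e\<in>E. e \<subseteq> V"
  shows "(\<Sum>v\<in>V. deg E v) = (\<Sum>e\<in>E. card e)"
proof -
  have "(\<Sum>v\<in>V. deg E v) = (\<Sum>v\<in>V. \<Sum>e\<in>E. if v \<in> e then 1 else 0)"
    using assms unfolding deg_def by (simp add: sum.inter_filter[symmetric])
  also have "\<dots> = (\<Sum>e\<in>E. \<Sum>v\<in>V. if v \<in> e then 1 else 0)" by (rule sum.swap)
  also have "\<dots> = (\<Sum>e\<in>E. card e)"
  proof (rule sum.cong)
    fix e assume "e \<in> E"
    then have "{v\<in>V. v \<in> e} = e" using assms by auto
    then show "(\<Sum>v\<in>V. if v \<in> e then 1 else 0) = card e"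
      using assms(1) by (simp add: sum.inter_filter[symmetric])
  qed simp
  finally show ?thesis .
qed

lemma tree_has_edge_at:
  assumes t: "tree_on V E" and "card V \<ge> 2" and "v \<in> V"
  shows "\<exists>e\<in>E. v \<in> e"
proof -
  have fin: "finite V" using t unfolding tree_on_def by auto
  have "\<exists>u\<in>V. u \<noteq> v"
  proof (rule ccontr)
    assume "\<not> ?thesis"
    then have "V \<subseteq> {v}" by auto
    then have "card V \<le> card {v}" by (intro card_mono) auto
    then have "card V \<le> 1" by simp
    then show False using assms by simp
  qed
  then obtain u where u: "u \<in> V" "u \<noteq> v" by auto
  have "(adj E)\<^sup>*\<^sup>* v u" using t u assms(3) unfolding tree_on_def by auto
  then obtain x where "adj E v x" using u(2) by (metis converse_rtranclpE)
  then show ?thesis unfolding adj_def by auto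
qed


lemma tree_leaf:
  assumes t: "tree_on V E" and c: "card V \<ge> 2"
  shows "\<exists>l p. l \<in> V \<and> {l, p} \<in> E \<and> l \<noteq> p \<and> (\<forall>e\<in>E. l \<in> e \<longrightarrow> e = {l, p})"
proof -
  have fin: "finite V" and finE: "finite E" and ed: "\<forall>e\<in>E. card e = 2 \<and> e \<subseteq> V"
    and cE: "card E = card V - 1"
    using t tree_on_edges(1)[OF t] unfolding tree_on_def by auto
  have "(\<Sum>v\<in>V. card {e\<in>E. v \<in> e}) = (\<Sum>e\<in>E. card e)" using sum_deg[OF fin finE] ed unfolding deg_def by auto
  also have "\<dots> = 2 * card E" using ed by simp
  finally have sd: "(\<Sum>v\<in>V. card {e\<in>E. v \<in> e}) = 2 * card E" .
  have "\<exists>l\<in>V. card {e\<in>E. l \<in> e} < 2"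
  proof (rule ccontr)
    assume "\<not> ?thesis"
    then have "\<forall>v\<in>V. 2 \<le> card {e\<in>E. v \<in> e}" by auto
    then have "(\<Sum>v\<in>V. (2::nat)) \<le> (\<Sum>v\<in>V. card {e\<in>E. v \<in> e})" by (intro sum_mono) auto
    then have "2 * card V \<le> 2 * card E" using sd by simp
    then show False using cE c by simp
  qed
  then obtain l where l: "l \<in> V" "card {e\<in>E. l \<in> e} < 2" by auto
  obtain e0 where e0: "e0 \<in> E" "l \<in> e0" using tree_has_edge_at[OF t c l(1)] by auto
  have "finite {e\<in>E. l \<in> e}" using finE by simp
  moreover have "e0 \<in> {e\<in>E. l \<in> e}" using e0 by simp
  ultimately have "card {e\<in>E. l \<in> e} \<ge> 1"
    by (metis One_nat_def Suc_leI card_gt_0_iff empty_iff)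
  then have "card {e\<in>E. l \<in> e} = 1" using l by simp
  then obtain f where f: "{e\<in>E. l \<in> e} = {f}" by (meson card_1_singletonE)
  then have fE: "f \<in> E" "l \<in> f" by auto
  obtain x y where xy: "f = {x, y}" "x \<noteq> y" using card2_pair ed fE by blast
  define p where "p = (if x = l then y else x)"
  have fl: "f = {l, p}" "l \<noteq> p" using xy fE(2) unfolding p_def by auto
  have "\<forall>e\<in>E. l \<in> e \<longrightarrow> e = {l, p}" using f fl by auto
  then show ?thesis using l(1) fl fE by blast
qed

text \<open>Deleting the only edge at l does not disconnect the remaining vertices.\<close>
lemma bypass:
  assumes one: "\<forall>e\<in>F. l \<in> e \<longrightarrow> e = {l, p}" and lp: "l \<noteq> p"
    and r: "(adj F)\<^sup>*\<^sup>* u v" and ul: "u \<noteq> l"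
  shows "(v \<noteq> l \<longrightarrow> (adj (F - {{l, p}}))\<^sup>*\<^sup>* u v) \<and> (v = l \<longrightarrow> (adj (F - {{l, p}}))\<^sup>*\<^sup>* u p)"
  using r
proof (induction rule: rtranclp_induct)
  case base then show ?case using ul by simp
next
  case (step y z)
  have yz: "{y, z} \<in> F" using step(2) unfolding adj_def .
  show ?case
  proof (cases "y = l")
    case True
    then have "{l, z} = {l, p}" using one yz by auto
    then have "z = p" using lp by (auto simp: doubleton_eq_iff)
    then show ?thesis using step(3) True lp by auto
  next
    case False
    then have IH: "(adj (F - {{l, p}}))\<^sup>*\<^sup>* u y" using step(3) by simp
    show ?thesis
    proof (cases "z = l")
      case True
      then have "{y, l} = {l, p}" using one yz by auto
      then have "y = p" using False by (auto simp: doubleton_eq_iff)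
      then show ?thesis using IH True by simp
    next
      case False2: False
      have "l \<notin> {y, z}" using False False2 by simp
      then have "{y, z} \<noteq> {l, p}" by auto
      then have "adj (F - {{l, p}}) y z" using yz unfolding adj_def by simp
      then show ?thesis using IH False2 by (meson rtranclp.rtrancl_into_rtrancl)
    qed
  qed
qed

lemma tree_remove_leaf:
  assumes t: "tree_on V E" and c: "card V \<ge> 2" and l: "l \<in> V" "{l, p} \<in> E" "l \<noteq> p"
    and one: "\<forall>e\<in>E. l \<in> e \<longrightarrow> e = {l, p}"
  shows "tree_on (V - {l}) (E - {{l, p}})"
proof -
  have fin: "finite V" and cE: "card E = card V - 1" and con: "\<forall>u\<in>V. \<forall>v\<in>V. (adj E)\<^sup>*\<^sup>* u v"
    using t unfolding tree_on_def by auto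
  note ed = tree_on_edges[OF t]
  have "p \<in> V" using ed(2) l(2) by auto
  then have ne: "V - {l} \<noteq> {}" using l(3) by auto
  have ed': "\<forall>e\<in>E - {{l, p}}. card e = 2 \<and> e \<subseteq> V - {l}" using ed(2) one by auto
  have "card (E - {{l, p}}) = card (V - {l}) - 1" using l ed(1) cE fin by simp
  moreover have "\<forall>u\<in>V - {l}. \<forall>v\<in>V - {l}. (adj (E - {{l, p}}))\<^sup>*\<^sup>* u v"
    using bypass[OF one l(3)] con by blast
  ultimately show ?thesis unfolding tree_on_def using fin ne ed' by auto
qed

lemma tree_induct[consumes 1, case_names base step]:
  assumes t: "tree_on V E"
    and base: "\<And>V E. tree_on V E \<Longrightarrow> card V = 1 \<Longrightarrow> E = {} \<Longrightarrow> P V E"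
    and step: "\<And>V E l p. tree_on V E \<Longrightarrow> card V \<ge> 2 \<Longrightarrow> l \<in> V \<Longrightarrow> {l, p} \<in> E \<Longrightarrow> l \<noteq> p
       \<Longrightarrow> (\<forall>e\<in>E. l \<in> e \<longrightarrow> e = {l, p}) \<Longrightarrow> P (V - {l}) (E - {{l, p}}) \<Longrightarrow> P V E"
  shows "P V E"
  using t
proof (induction "card V" arbitrary: V E rule: less_induct)
  case less
  have fin: "finite V" "V \<noteq> {}" "card E = card V - 1" using less.prems unfolding tree_on_def by auto
  then have "card V \<ge> 1" by (simp add: Suc_leI card_gt_0_iff)
  show ?case
  proof (cases "card V = 1")
    case True
    then have "E = {}" using fin tree_on_edges(1)[OF less.prems] by simp
    then show ?thesis using base less.prems True by simp
  next
    case False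
    then have c2: "card V \<ge> 2" using \<open>card V \<ge> 1\<close> by simp
    obtain l p where lp: "l \<in> V" "{l, p} \<in> E" "l \<noteq> p" "\<forall>e\<in>E. l \<in> e \<longrightarrow> e = {l, p}"
      using tree_leaf[OF less.prems c2] by blast
    have "card (V - {l}) < card V" using lp(1) fin(1,2) by (simp add: card_gt_0_iff)
    then have "P (V - {l}) (E - {{l, p}})"
      using less.hyps tree_remove_leaf[OF less.prems c2 lp] by blast
    then show ?thesis using step[OF less.prems c2 lp] by blast
  qed
qed

lemma tree_bipartite:
  assumes "tree_on V E"
  shows "\<exists>c::nat \<Rightarrow> bool. \<forall>e\<in>E. \<forall>i\<in>e. \<forall>j\<in>e. i \<noteq> j \<longrightarrow> c i \<noteq> c j"
  using assms
proof (induction rule: tree_induct)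
  case (base V E) then show ?case by simp
next
  case (step V E l p)
  obtain c :: "nat \<Rightarrow> bool" where c: "\<forall>e\<in>E - {{l, p}}. \<forall>i\<in>e. \<forall>j\<in>e. i \<noteq> j \<longrightarrow> c i \<noteq> c j"
    using step(7) by blast
  define c' where "c' = c(l := \<not> c p)"
  have "\<forall>e\<in>E. \<forall>i\<in>e. \<forall>j\<in>e. i \<noteq> j \<longrightarrow> c' i \<noteq> c' j"
  proof (intro ballI impI)
    fix e i j assume e: "e \<in> E" and ij: "i \<in> e" "j \<in> e" "i \<noteq> j"
    show "c' i \<noteq> c' j"
    proof (cases "e = {l, p}")
      case True then show ?thesis using ij step(5) unfolding c'_def by auto
    next
      case False
      then have il: "i \<noteq> l" "j \<noteq> l" and "e \<in> E - {{l, p}}" using step(6) e ij by auto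
      then have "c i \<noteq> c j" using c ij by blast
      then show ?thesis using il unfolding c'_def by simp
    qed
  qed
  then show ?case by blast
qed

lemma isolated_reach:
  assumes "\<forall>e\<in>F. l \<notin> e" and "(adj F)\<^sup>*\<^sup>* l x"
  shows "x = l"
  using assms(2)
proof (induction rule: rtranclp_induct)
  case base then show ?case by simp
next
  case (step y z) then show ?case using assms(1) unfolding adj_def by auto
qed


lemma tree_bridge:
  assumes "tree_on V E"
  shows "\<forall>b w. {b, w} \<in> E \<longrightarrow> \<not> (adj (E - {{b, w}}))\<^sup>*\<^sup>* b w"
  using assms
proof (induction rule: tree_induct)
  case (base V E) then show ?case by simp
next
  case (step V E l p)
  show ?case
  proof (intro allI impI notI)
    fix b w assume bw: "{b, w} \<in> E" and r: "(adj (E - {{b, w}}))\<^sup>*\<^sup>* b w"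
    have bnw: "b \<noteq> w"
    proof
      assume "b = w"
      then have "card {b, w} = 1" by simp
      then show False using bspec[OF tree_on_edges(2)[OF step(1)] bw] by simp
    qed
    show False
    proof (cases "{b, w} = {l, p}")
      case True
      have iso: "\<forall>e\<in>E - {{b, w}}. l \<notin> e" using step(6) True by auto
      have "l \<in> {b, w}" using True by simp
      then have "l = b \<or> l = w" by simp
      then show False
      proof
        assume "l = b"
        then show False using isolated_reach[OF iso] r bnw by auto
      next
        assume "l = w"
        then show False using isolated_reach[OF iso] reach_sym[OF r] bnw by auto
      qed
    next
      case False
      then have lb: "l \<noteq> b" "l \<noteq> w" using step(6) bw by auto
      have one: "\<forall>e\<in>E - {{b, w}}. l \<in> e \<longrightarrow> e = {l, p}" using step(6) by auto
      have "(adj (E - {{b, w}} - {{l, p}}))\<^sup>*\<^sup>* b w"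
        using bypass[OF one step(5) r] lb by auto
      moreover have "E - {{b, w}} - {{l, p}} = E - {{l, p}} - {{b, w}}" by auto
      moreover have "{b, w} \<in> E - {{l, p}}" using bw False by auto
      then have "\<not> (adj (E - {{l, p}} - {{b, w}}))\<^sup>*\<^sup>* b w" using step(7) by blast
      ultimately show False by simp
    qed
  qed
qed

lemma reach_remove_edge:
  assumes "(adj F)\<^sup>*\<^sup>* x y"
  shows "(adj (F - {{b, w}}))\<^sup>*\<^sup>* x y \<or> (adj (F - {{b, w}}))\<^sup>*\<^sup>* x b \<or> (adj (F - {{b, w}}))\<^sup>*\<^sup>* x w"
  using assms
proof (induction rule: rtranclp_induct)
  case base then show ?case by simp
next
  case (step y z)
  show ?case
  proof (cases "{y, z} = {b, w}")
    case True
    then have "y = b \<or> y = w" by (auto simp: doubleton_eq_iff)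
    then show ?thesis using step(3) by auto
  next
    case False
    then have "adj (F - {{b, w}}) y z" using step(2) unfolding adj_def by auto
    then show ?thesis using step(3) by (meson rtranclp.rtrancl_into_rtrancl)
  qed
qed

section \<open>Quadratic forms of a graph\<close>

text \<open>For a vector x (a real function on vertices): esum x e is the sum of x over the
  edge e, qform E x is the signless Laplacian form \<Sum>{u,v}\<in>E. (x u + x v)^2,
  lform E x the Laplacian form \<Sum>{u,v}\<in>E. (x u - x v)^2 (for 2-element edges),
  star_sum E x v the row v of the signless Laplacian applied to x, and sqnorm n x the
  squared norm of x on {..<n}.\<close>
definition esum :: "(nat \<Rightarrow> real) \<Rightarrow> nat set \<Rightarrow> real" where
  "esum x e = (\<Sum>i\<in>e. x i)"

definition qform :: "nat set set \<Rightarrow> (nat \<Rightarrow> real) \<Rightarrow> real" where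
  "qform E x = (\<Sum>e\<in>E. (esum x e)^2)"

definition star_sum :: "nat set set \<Rightarrow> (nat \<Rightarrow> real) \<Rightarrow> nat \<Rightarrow> real" where
  "star_sum E x v = (\<Sum>e\<in>{e\<in>E. v \<in> e}. esum x e)"

definition sqnorm :: "nat \<Rightarrow> (nat \<Rightarrow> real) \<Rightarrow> real" where
  "sqnorm n x = (\<Sum>i<n. (x i)^2)"

definition lform :: "nat set set \<Rightarrow> (nat \<Rightarrow> real) \<Rightarrow> real" where
  "lform E x = (\<Sum>e\<in>E. 2 * (\<Sum>i\<in>e. (x i)^2) - (esum x e)^2)"

definition supported :: "nat \<Rightarrow> (nat \<Rightarrow> real) \<Rightarrow> bool" where
  "supported n x \<longleftrightarrow> (\<forall>i\<ge>n. x i = 0)"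

lemma esum_pair: "i \<noteq> j \<Longrightarrow> esum x {i, j} = x i + x j"
  unfolding esum_def by simp

lemma esum_scale: "esum (\<lambda>i. c * y i) e = c * esum y e"
  unfolding esum_def by (simp add: sum_distrib_left)

lemma qform_scale: "qform E (\<lambda>i. c * y i) = c^2 * qform E y"
  unfolding qform_def esum_scale by (simp add: sum_distrib_left power_mult_distrib)

lemma sqnorm_scale: "sqnorm n (\<lambda>i. c * y i) = c^2 * sqnorm n y"
  unfolding sqnorm_def by (simp add: sum_distrib_left power_mult_distrib)

lemma sqnorm_nonneg: "sqnorm n y \<ge> 0"
  unfolding sqnorm_def by (simp add: sum_nonneg)

lemma sqnorm_zero: "sqnorm n y = 0 \<Longrightarrow> i < n \<Longrightarrow> y i = 0"
  unfolding sqnorm_def using sum_nonneg_eq_0_iff[of "{..<n}" "\<lambda>i. (y i)^2"] by simp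

lemma quadratic_nonpos_linear_zero:
  fixes a b :: real
  assumes "\<forall>t. a * t + b * t^2 \<le> 0"
  shows "a = 0"
proof (rule ccontr)
  assume a: "a \<noteq> 0"
  define k where "k = \<bar>b\<bar> + 1"
  have k: "k > 0" unfolding k_def by simp
  define t where "t = a / k"
  have e1: "a * t + b * t^2 = a^2 / k + b * a^2 / k^2" unfolding t_def by (simp add: power2_eq_square)
  have e2: "a^2 / k + b * a^2 / k^2 \<ge> a^2 / k - \<bar>b\<bar> * a^2 / k^2"
  proof -
    have "- \<bar>b\<bar> * a^2 \<le> b * a^2" using mult_right_mono[of "-\<bar>b\<bar>" b "a^2"] by simp
    then have "(- \<bar>b\<bar> * a^2) / k^2 \<le> (b * a^2) / k^2" by (rule divide_right_mono) simp
    then show ?thesis by simp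
  qed
  have e3: "a^2 / k - \<bar>b\<bar> * a^2 / k^2 = a^2 / k^2"
  proof -
    have bk: "\<bar>b\<bar> = k - 1" unfolding k_def by simp
    show ?thesis unfolding bk using k by (simp add: field_simps power2_eq_square)
  qed
  have e4: "a^2 / k^2 > 0" using a k by simp
  have "a * t + b * t^2 > 0" using e1 e2 e3 e4 by linarith
  then show False using assms by (meson not_le)
qed

lemma variation:
  assumes finE: "finite E" and fe: "\<forall>e\<in>E. finite e" and v: "v < n" and sp: "supported n p"
    and le: "\<forall>y. supported n y \<longrightarrow> qform E y \<le> S * sqnorm n y" and eq: "qform E p = S * sqnorm n p"
  shows "star_sum E p v = S * p v"
proof -
  have key: "2 * (star_sum E p v - S * p v) * t + (card {e\<in>E. v \<in> e} - S) * t^2 \<le> 0" for t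
  proof -
    define y where "y = (\<lambda>i. p i + (if i = v then t else 0))"
    have "supported n y" using sp v unfolding supported_def y_def by auto
    then have 1: "qform E y \<le> S * sqnorm n y" using le by blast
    have sey: "esum y e = esum p e + (if v \<in> e then t else 0)" if "e \<in> E" for e
      using fe that unfolding esum_def y_def by (simp add: sum.distrib)
    have "qform E y = (\<Sum>e\<in>E. (esum p e)^2 + 2 * t * (if v \<in> e then esum p e else 0) + t^2 * (if v \<in> e then 1 else 0))"
      unfolding qform_def by (rule sum.cong) (auto simp: sey power2_eq_square algebra_simps)
    also have "\<dots> = qform E p + 2 * t * star_sum E p v + t^2 * card {e\<in>E. v \<in> e}"
    proof -
      have cnt: "(\<Sum>e\<in>E. if v \<in> e then (1::real) else 0) = real (card {e\<in>E. v \<in> e})"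
        using finE by (simp add: sum.inter_filter[symmetric])
      show ?thesis
        unfolding qform_def star_sum_def using finE cnt
        by (simp add: sum.distrib sum_distrib_left[symmetric] sum.inter_filter)
    qed
    finally have 2: "qform E y = qform E p + 2 * t * star_sum E p v + t^2 * card {e\<in>E. v \<in> e}" .
    have "sqnorm n y = (\<Sum>i<n. (p i)^2 + 2 * t * (if i = v then p i else 0) + t^2 * (if i = v then 1 else 0))"
      unfolding sqnorm_def y_def by (rule sum.cong) (auto simp: power2_eq_square algebra_simps)
    also have "\<dots> = sqnorm n p + 2 * t * p v + t^2"
      unfolding sqnorm_def using v by (simp add: sum.distrib sum_distrib_left[symmetric])
    finally have 3: "sqnorm n y = sqnorm n p + 2 * t * p v + t^2" .
    from 1 2 3 eq show ?thesis by (simp add: algebra_simps)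
  qed
  have "2 * (star_sum E p v - S * p v) = 0"
    by (rule quadratic_nonpos_linear_zero[where b = "card {e\<in>E. v \<in> e} - S"]) (use key in \<open>simp add: mult.commute\<close>)
  then show ?thesis by simp
qed

text \<open>A nonnegative eigenvector of a connected graph is positive everywhere: a zero
  propagates along edges.\<close>
lemma positivity:
  assumes ed: "\<forall>e\<in>E. card e = 2 \<and> e \<subseteq> {..<n}" and finE: "finite E"
    and con: "\<forall>u<n. \<forall>v<n. (adj E)\<^sup>*\<^sup>* u v"
    and nn: "\<forall>i. 0 \<le> p i" and eig: "\<forall>v<n. star_sum E p v = S * p v"
    and nz: "sqnorm n p = 1"
  shows "\<forall>v<n. 0 < p v"
proof (rule ccontr)
  assume "\<not> ?thesis"
  then obtain a where a: "a < n" "p a = 0" using nn by (meson not_less order_antisym)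
  have zero: "p v = 0 \<and> v < n" if r: "(adj E)\<^sup>*\<^sup>* a v" for v
    using r
  proof (induction rule: rtranclp_induct)
    case base then show ?case using a by simp
  next
    case (step y z)
    have yz: "{y, z} \<in> E" using step(2) unfolding adj_def .
    have yneq: "y \<noteq> z"
    proof
      assume "y = z" then have "card {y, z} = 1" by simp
      then show False using ed yz by auto
    qed
    have "star_sum E p y = 0" using eig step(3) by simp
    moreover have "\<forall>e\<in>{e\<in>E. y \<in> e}. 0 \<le> esum p e"
      unfolding esum_def using nn by (simp add: sum_nonneg)
    moreover have "finite {e\<in>E. y \<in> e}" using finE by simp
    ultimately have "\<forall>e\<in>{e\<in>E. y \<in> e}. esum p e = 0"
      unfolding star_sum_def using sum_nonneg_eq_0_iff by blast
    then have "esum p {y, z} = 0" using yz by simp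
    then have "p y + p z = 0" using esum_pair[OF yneq] by simp
    moreover have "z < n" using ed yz by auto
    ultimately show ?case using nn[rule_format, of z] step(3) by simp
  qed
  have "\<forall>v<n. p v = 0" using zero con a(1) by blast
  then have "sqnorm n p = 0" unfolding sqnorm_def by simp
  then show False using nz by simp
qed

lemma lform_bipartite:
  assumes ed: "\<forall>e\<in>E. card e = 2" and c: "\<forall>e\<in>E. \<forall>i\<in>e. \<forall>j\<in>e. i \<noteq> j \<longrightarrow> c i \<noteq> c j"
  shows "lform E x = qform E (\<lambda>i. (if c i then 1 else -1) * x i)"
  unfolding lform_def qform_def
proof (rule sum.cong)
  fix e assume e: "e \<in> E"
  have "card e = 2" using ed e by blast
  then obtain i j where ij: "e = {i, j}" "i \<noteq> j" using card2_pair by blast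
  have "i \<in> e" "j \<in> e" using ij by auto
  then have "c i \<noteq> c j" using c[rule_format, OF e] ij(2) by blast
  then show "2 * (\<Sum>i\<in>e. (x i)^2) - (esum x e)^2 = (esum (\<lambda>i. (if c i then 1 else -1) * x i) e)^2"
    using ij by (cases "c i") (auto simp: esum_pair power2_eq_square algebra_simps)
qed simp

section \<open>The Laplacian matrix in terms of the quadratic forms\<close>

lemma sum_swap_inc:
  assumes "finite E" "finite A" "\<forall>e\<in>E. e \<subseteq> A"
  shows "(\<Sum>i\<in>A. \<Sum>e\<in>{e\<in>E. i \<in> e}. g i e) = (\<Sum>e\<in>E. \<Sum>i\<in>e. g i e)"
proof -
  have "(\<Sum>i\<in>A. \<Sum>e\<in>{e\<in>E. i \<in> e}. g i e) = (\<Sum>i\<in>A. \<Sum>e\<in>E. if i \<in> e then g i e else 0)"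
    using assms(1) by (simp add: sum.inter_filter)
  also have "\<dots> = (\<Sum>e\<in>E. \<Sum>i\<in>A. if i \<in> e then g i e else 0)" by (rule sum.swap)
  also have "\<dots> = (\<Sum>e\<in>E. \<Sum>i\<in>e. g i e)"
  proof (rule sum.cong)
    fix e assume "e \<in> E"
    then have "{i\<in>A. i \<in> e} = e" using assms(3) by auto
    then show "(\<Sum>i\<in>A. if i \<in> e then g i e else 0) = (\<Sum>i\<in>e. g i e)"
      using assms(2) by (simp add: sum.inter_filter[symmetric])
  qed simp
  finally show ?thesis .
qed

lemma nbr_bij:
  assumes ed: "\<forall>e\<in>E. card e = 2 \<and> e \<subseteq> {..<n}"
  shows "bij_betw (\<lambda>j. {i, j}) {j\<in>{..<n}. adj E i j} {e\<in>E. i \<in> e}"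
proof (rule bij_betw_imageI)
  show "inj_on (\<lambda>j. {i, j}) {j\<in>{..<n}. adj E i j}"
    by (rule inj_onI) (auto simp: doubleton_eq_iff)
  show "(\<lambda>j. {i, j}) ` {j\<in>{..<n}. adj E i j} = {e\<in>E. i \<in> e}"
  proof
    show "(\<lambda>j. {i, j}) ` {j\<in>{..<n}. adj E i j} \<subseteq> {e\<in>E. i \<in> e}"
      unfolding adj_def by auto
    show "{e\<in>E. i \<in> e} \<subseteq> (\<lambda>j. {i, j}) ` {j\<in>{..<n}. adj E i j}"
    proof
      fix e assume e: "e \<in> {e\<in>E. i \<in> e}"
      have "card e = 2" "e \<subseteq> {..<n}" using ed e by auto
      then obtain x y where xy: "e = {x, y}" "x \<noteq> y" using card2_pair by blast
      define j where "j = (if x = i then y else x)"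
      have ej: "e = {i, j}" using xy e unfolding j_def by auto
      then have "j < n" "adj E i j" using \<open>e \<subseteq> {..<n}\<close> e unfolding adj_def by auto
      then show "e \<in> (\<lambda>j. {i, j}) ` {j\<in>{..<n}. adj E i j}" using ej by auto
    qed
  qed
qed

lemma adj_neq:
  assumes ed: "\<forall>e\<in>E. card e = 2 \<and> e \<subseteq> {..<n}" and "adj E i j"
  shows "i \<noteq> j"
proof
  assume "i = j"
  then have "card {i, j} = 1" by simp
  then show False using ed assms(2) unfolding adj_def by auto
qed

lemma nbr_sum:
  assumes ed: "\<forall>e\<in>E. card e = 2 \<and> e \<subseteq> {..<n}"
  shows "(\<Sum>j\<in>{j\<in>{..<n}. adj E i j}. g j) = (\<Sum>e\<in>{e\<in>E. i \<in> e}. esum g e - g i)"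
proof -
  have "(\<Sum>e\<in>{e\<in>E. i \<in> e}. esum g e - g i) = (\<Sum>j\<in>{j\<in>{..<n}. adj E i j}. esum g {i, j} - g i)"
    using sum.reindex_bij_betw[OF nbr_bij[OF ed], of "\<lambda>e. esum g e - g i"] by simp
  also have "\<dots> = (\<Sum>j\<in>{j\<in>{..<n}. adj E i j}. g j)"
  proof (rule sum.cong)
    fix j assume "j \<in> {j\<in>{..<n}. adj E i j}"
    then have "i \<noteq> j" using adj_neq[OF ed] by auto
    then show "esum g {i, j} - g i = g j" by (simp add: esum_pair)
  qed simp
  finally show ?thesis by simp
qed

lemma lap_mult:
  assumes ed: "\<forall>e\<in>E. card e = 2 \<and> e \<subseteq> {..<n}" and finE: "finite E"
    and i: "i < n" and v: "dim_vec v = n"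
  shows "(laplacian n E *\<^sub>v v) $ i = (\<Sum>e\<in>{e\<in>E. i \<in> e}. 2 * v $ i - esum (\<lambda>k. v $ k) e)"
proof -
  let ?L = "laplacian n E"
  have "(?L *\<^sub>v v) $ i = (\<Sum>j\<in>{0..<n}. ?L $$ (i, j) * v $ j)"
    using i v unfolding laplacian_def by (simp add: scalar_prod_def)
  also have "\<dots> = (\<Sum>j<n. (if j = i then real (deg E i) * v $ i else 0) - (if adj E i j then v $ j else 0))"
    using i unfolding laplacian_def by (intro sum.cong) (auto simp: atLeast0LessThan left_diff_distrib)
  also have "\<dots> = real (deg E i) * v $ i - (\<Sum>j\<in>{j\<in>{..<n}. adj E i j}. v $ j)"
  proof -
    have "(\<Sum>j<n. if adj E i j then v $ j else 0) = (\<Sum>j\<in>{j\<in>{..<n}. adj E i j}. v $ j)"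
      by (rule sum.inter_filter[symmetric]) simp
    then show ?thesis using i by (simp add: sum_subtractf)
  qed
  also have "\<dots> = real (deg E i) * v $ i - (\<Sum>e\<in>{e\<in>E. i \<in> e}. esum (\<lambda>k. v $ k) e - v $ i)"
    using nbr_sum[OF ed, where i=i and g="\<lambda>k. v $ k"] by simp
  finally have 1: "(?L *\<^sub>v v) $ i = real (deg E i) * v $ i - (\<Sum>e\<in>{e\<in>E. i \<in> e}. esum (\<lambda>k. v $ k) e - v $ i)" .
  have 2: "real (deg E i) * v $ i = (\<Sum>e\<in>{e\<in>E. i \<in> e}. v $ i)"
    unfolding deg_def by simp
  have 3: "(\<Sum>e\<in>{e\<in>E. i \<in> e}. v $ i) - (\<Sum>e\<in>{e\<in>E. i \<in> e}. esum (\<lambda>k. v $ k) e - v $ i)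
     = (\<Sum>e\<in>{e\<in>E. i \<in> e}. v $ i - (esum (\<lambda>k. v $ k) e - v $ i))"
    by (rule sum_subtractf[symmetric])
  have 4: "(\<Sum>e\<in>{e\<in>E. i \<in> e}. v $ i - (esum (\<lambda>k. v $ k) e - v $ i))
     = (\<Sum>e\<in>{e\<in>E. i \<in> e}. 2 * v $ i - esum (\<lambda>k. v $ k) e)"
    by (rule sum.cong) auto
  show ?thesis using 1 2 3 4 by simp
qed

lemma quad_lap:
  assumes ed: "\<forall>e\<in>E. card e = 2 \<and> e \<subseteq> {..<n}" and finE: "finite E" and v: "dim_vec v = n"
  shows "(\<Sum>i<n. v $ i * (laplacian n E *\<^sub>v v) $ i) = lform E (\<lambda>k. v $ k)"
proof -
  have "(\<Sum>i<n. v $ i * (laplacian n E *\<^sub>v v) $ i)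
      = (\<Sum>i<n. \<Sum>e\<in>{e\<in>E. i \<in> e}. v $ i * (2 * v $ i - esum (\<lambda>k. v $ k) e))"
    using lap_mult[OF ed finE _ v] by (simp add: sum_distrib_left)
  also have "\<dots> = (\<Sum>e\<in>E. \<Sum>i\<in>e. v $ i * (2 * v $ i - esum (\<lambda>k. v $ k) e))"
    by (rule sum_swap_inc) (use finE ed in auto)
  also have "\<dots> = lform E (\<lambda>k. v $ k)"
    unfolding lform_def
  proof (rule sum.cong)
    fix e assume "e \<in> E"
    have "(\<Sum>i\<in>e. v $ i * (2 * v $ i - esum (\<lambda>k. v $ k) e))
        = 2 * (\<Sum>i\<in>e. (v $ i)^2) - (\<Sum>i\<in>e. v $ i) * esum (\<lambda>k. v $ k) e"
      by (simp add: sum_subtractf sum_distrib_left sum_distrib_right power2_eq_square algebra_simps)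
    then show "(\<Sum>i\<in>e. v $ i * (2 * v $ i - esum (\<lambda>k. v $ k) e))
        = 2 * (\<Sum>i\<in>e. (v $ i)^2) - (esum (\<lambda>k. v $ k) e)^2"
      by (simp add: esum_def power2_eq_square)
  qed simp
  finally show ?thesis .
qed

lemma lform_cong:
  assumes "\<forall>e\<in>E. e \<subseteq> {..<n}" "\<forall>i<n. f i = g i"
  shows "lform E f = lform E g"
  unfolding lform_def esum_def
proof (rule sum.cong)
  fix e assume "e \<in> E"
  then have "\<forall>i\<in>e. f i = g i" using assms by auto
  then show "2 * (\<Sum>i\<in>e. (f i)\<^sup>2) - (\<Sum>i\<in>e. f i)\<^sup>2 = 2 * (\<Sum>i\<in>e. (g i)\<^sup>2) - (\<Sum>i\<in>e. g i)\<^sup>2"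
    by simp
qed simp

text \<open>A square matrix has finitely many eigenvalues, so lambda_max is a genuine maximum.\<close>
lemma finite_eigenvalues:
  assumes "A \<in> carrier_mat n n"
  shows "finite {\<mu>::real. eigenvalue A \<mu>}"
proof -
  have "coeff (char_poly A) n = 1" using degree_monic_char_poly[OF assms] by simp
  then have "char_poly A \<noteq> 0" by auto
  then have "finite {x. poly (char_poly A) x = 0}" by (rule poly_roots_finite)
  moreover have "{\<mu>. eigenvalue A \<mu>} = {x. poly (char_poly A) x = 0}"
    using eigenvalue_root_char_poly[OF assms] by auto
  ultimately show ?thesis by simp
qed

section \<open>The maximum of the Rayleigh quotient\<close>

lemma diag_subseq:
  fixes x :: "nat \<Rightarrow> nat \<Rightarrow> real"
  assumes bd: "\<forall>k i. \<bar>x k i\<bar> \<le> 1"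
  shows "\<exists>r. strict_mono r \<and> (\<forall>i<m. convergent (\<lambda>k. x (r k) i))"
proof (induction m)
  case 0
  have "strict_mono (id :: nat \<Rightarrow> nat)" by (simp add: strict_mono_def)
  then show ?case by blast
next
  case (Suc m)
  then obtain r where r: "strict_mono r" "\<forall>i<m. convergent (\<lambda>k. x (r k) i)" by blast
  obtain f where f: "strict_mono f" "monoseq (\<lambda>k. x (r (f k)) m)"
    using seq_monosub[of "\<lambda>k. x (r k) m"] by blast
  have "Bseq (\<lambda>k. x (r (f k)) m)" using bd by (intro BseqI'[where K=1]) simp
  then have cm: "convergent (\<lambda>k. x (r (f k)) m)" using f(2) Bseq_monoseq_convergent by blast
  have "\<forall>i<m. convergent (\<lambda>k. x (r (f k)) i)"
  proof (intro allI impI)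
    fix i assume "i < m"
    then have "convergent ((\<lambda>k. x (r k) i) \<circ> f)" using r(2) f(1) convergent_subseq_convergent by blast
    then show "convergent (\<lambda>k. x (r (f k)) i)" by (simp add: o_def)
  qed
  then have "\<forall>i<Suc m. convergent (\<lambda>k. x ((r \<circ> f) k) i)" using cm by (auto simp: less_Suc_eq)
  moreover have "strict_mono (r \<circ> f)" using r(1) f(1) by (rule strict_mono_o)
  ultimately show ?case by blast
qed

lemma unit_coord_bound:
  assumes "supported n y" and "sqnorm n y = 1"
  shows "\<bar>y i\<bar> \<le> 1"
proof (cases "i < n")
  case True
  have "(y i)^2 \<le> sqnorm n y" unfolding sqnorm_def
    by (rule member_le_sum[where f="\<lambda>i. (y i)^2"]) (use True in auto)
  then show ?thesis using assms(2) by (simp add: abs_square_le_1)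
next
  case False then show ?thesis using assms(1) unfolding supported_def by simp
qed

lemma qform_bounded:
  assumes "\<forall>e\<in>E. card e = 2" and "\<forall>i. \<bar>y i\<bar> \<le> 1"
  shows "qform E y \<le> 4 * card E"
proof -
  have "(esum y e)^2 \<le> 4" if e: "e \<in> E" for e
  proof -
    have fe: "finite e" "card e = 2" using assms(1) e by (auto intro: card_ge_0_finite)
    have "\<bar>esum y e\<bar> \<le> (\<Sum>i\<in>e. \<bar>y i\<bar>)" unfolding esum_def by (rule sum_abs)
    also have "\<dots> \<le> (\<Sum>i\<in>e. 1)" by (rule sum_mono) (use assms(2) in auto)
    also have "\<dots> = 2" using fe by simp
    finally have "\<bar>esum y e\<bar>^2 \<le> 2^2" by (rule power_mono) simp
    then show ?thesis by simp
  qed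
  then have "qform E y \<le> (\<Sum>e\<in>E. 4)" unfolding qform_def by (intro sum_mono) auto
  then show ?thesis by simp
qed

lemma forms_tendsto:
  assumes ed: "\<forall>e\<in>E. card e = 2 \<and> e \<subseteq> {..<n}"
    and lim: "\<And>i. i < n \<Longrightarrow> (\<lambda>k. x k i) \<longlonglongrightarrow> z i"
  shows "(\<lambda>k. qform E (x k)) \<longlonglongrightarrow> qform E z" and "(\<lambda>k. sqnorm n (x k)) \<longlonglongrightarrow> sqnorm n z"
proof -
  have "(\<lambda>k. esum (x k) e) \<longlonglongrightarrow> esum z e" if e: "e \<in> E" for e
    unfolding esum_def by (rule tendsto_sum) (use lim ed e in auto)
  then show "(\<lambda>k. qform E (x k)) \<longlonglongrightarrow> qform E z"
    unfolding qform_def by (intro tendsto_sum tendsto_power)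
  show "(\<lambda>k. sqnorm n (x k)) \<longlonglongrightarrow> sqnorm n z"
    unfolding sqnorm_def by (intro tendsto_sum tendsto_power lim) simp
qed

lemma qform_max_attained:
  assumes n: "n \<ge> 1" and ed: "\<forall>e\<in>E. card e = 2 \<and> e \<subseteq> {..<n}"
  defines "U \<equiv> {y. supported n y \<and> sqnorm n y = 1}"
  shows "\<exists>z\<in>U. \<forall>y\<in>U. qform E y \<le> qform E z"
proof -
  define e0 where "e0 = (\<lambda>i::nat. if i = 0 then 1 else 0::real)"
  have "sqnorm n e0 = (\<Sum>i<n. if i = 0 then 1 else 0)"
    unfolding sqnorm_def by (rule sum.cong) (auto simp: e0_def)
  also have "\<dots> = 1" using n by simp
  finally have "e0 \<in> U" unfolding U_def supported_def using n by (simp add: e0_def)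
  then have Une: "qform E ` U \<noteq> {}" by auto
  have bdd: "bdd_above (qform E ` U)"
    using qform_bounded[of E] ed unit_coord_bound unfolding U_def by (intro bdd_aboveI2) blast
  define S where "S = Sup (qform E ` U)"
  have up: "qform E y \<le> S" if "y \<in> U" for y
    unfolding S_def by (rule cSup_upper) (use that bdd in auto)
  have "\<forall>k. \<exists>y\<in>U. S - inverse (real (Suc k)) < qform E y"
  proof
    fix k
    have "S - inverse (real (Suc k)) < S" by simp
    then show "\<exists>y\<in>U. S - inverse (real (Suc k)) < qform E y"
      unfolding S_def using less_cSup_iff[OF Une bdd] by auto
  qed
  then obtain x where x: "\<And>k. x k \<in> U" "\<And>k. S - inverse (real (Suc k)) < qform E (x k)"
    by metis
  have "\<forall>k i. \<bar>x k i\<bar> \<le> 1" using x(1) unit_coord_bound unfolding U_def by blast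
  then obtain r where r: "strict_mono r" "\<forall>i<n. convergent (\<lambda>k. x (r k) i)"
    using diag_subseq by blast
  define z where "z = (\<lambda>i. if i < n then lim (\<lambda>k. x (r k) i) else 0)"
  have zl: "(\<lambda>k. x (r k) i) \<longlonglongrightarrow> z i" if "i < n" for i
    using r(2) that unfolding z_def by (simp add: convergent_LIMSEQ_iff)
  note lims = forms_tendsto[of E n "\<lambda>k. x (r k)" z, OF ed zl]
  have x1: "sqnorm n (x k) = 1" for k using x(1)[of k] unfolding U_def by simp
  have "(\<lambda>k. sqnorm n (x (r k))) = (\<lambda>k. 1)" by (rule ext) (rule x1)
  then have "(\<lambda>k. 1) \<longlonglongrightarrow> sqnorm n z" using lims(2) by simp
  then have "sqnorm n z = 1" by (simp add: LIMSEQ_const_iff)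
  then have zU: "z \<in> U" unfolding U_def supported_def z_def by simp
  have low: "S - inverse (real (Suc k)) \<le> qform E (x (r k))" for k
  proof -
    have "inverse (real (Suc (r k))) \<le> inverse (real (Suc k))"
      using seq_suble[OF r(1), of k] by (simp add: le_imp_inverse_le)
    then show ?thesis using x(2)[of "r k"] by linarith
  qed
  have "(\<lambda>k. S - inverse (real (Suc k))) \<longlonglongrightarrow> S - 0"
    by (intro tendsto_diff tendsto_const LIMSEQ_inverse_real_of_nat)
  then have l2: "(\<lambda>k. S - inverse (real (Suc k))) \<longlonglongrightarrow> S" by simp
  have "(\<lambda>k. qform E (x (r k))) \<longlonglongrightarrow> S"
  proof (rule tendsto_sandwich[OF _ _ l2 tendsto_const])
    show "\<forall>\<^sub>F k in sequentially. S - inverse (real (Suc k)) \<le> qform E (x (r k))"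
      by (rule always_eventually) (use low in blast)
    show "\<forall>\<^sub>F k in sequentially. qform E (x (r k)) \<le> S"
      by (rule always_eventually) (use up x(1) in blast)
  qed
  then have "qform E z = S" using lims(1) LIMSEQ_unique by metis
  then show ?thesis using zU up by metis
qed

text \<open>By homogeneity a bound on unit vectors is a bound on the Rayleigh quotient.\<close>
lemma qform_rayleigh_bound:
  assumes ed: "\<forall>e\<in>E. e \<subseteq> {..<n}"
    and unit: "\<And>y. supported n y \<Longrightarrow> sqnorm n y = 1 \<Longrightarrow> qform E y \<le> S"
    and sy: "supported n y"
  shows "qform E y \<le> S * sqnorm n y"
proof (cases "sqnorm n y = 0")
  case True
  then have "\<forall>i<n. y i = 0" using sqnorm_zero by blast
  then have "\<forall>e\<in>E. esum y e = 0" unfolding esum_def using ed by (auto intro!: sum.neutral)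
  then have "qform E y = 0" unfolding qform_def by simp
  then show ?thesis using True by simp
next
  case False
  then have pos: "sqnorm n y > 0" using sqnorm_nonneg[of n y] by simp
  define c where "c = inverse (sqrt (sqnorm n y))"
  have c2: "c^2 = inverse (sqnorm n y)" unfolding c_def using pos by (simp add: power_inverse)
  have "qform E (\<lambda>i. c * y i) \<le> S"
    using unit sy pos c2 by (auto simp: supported_def sqnorm_scale)
  then have "inverse (sqnorm n y) * qform E y \<le> S" unfolding qform_scale c2 .
  then show ?thesis using pos by (simp add: field_simps)
qed

lemma rayleigh_max_exists:
  assumes n: "n \<ge> 1" and ed: "\<forall>e\<in>E. card e = 2 \<and> e \<subseteq> {..<n}"
  shows "\<exists>z. supported n z \<and> sqnorm n z = 1 \<and> (\<forall>y. supported n y \<longrightarrow> qform E y \<le> qform E z * sqnorm n y)"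
proof -
  obtain z where z: "supported n z" "sqnorm n z = 1"
    and max: "\<And>y. supported n y \<Longrightarrow> sqnorm n y = 1 \<Longrightarrow> qform E y \<le> qform E z"
    using qform_max_attained[OF n ed] by blast
  have "qform E y \<le> qform E z * sqnorm n y" if "supported n y" for y
    using qform_rayleigh_bound[OF _ max that] ed by blast
  then show ?thesis using z by blast
qed

lemma perron_vector:
  assumes t: "tree_on {..<n} E"
  shows "\<exists>S p. (\<forall>i. 0 \<le> p i) \<and> supported n p \<and> sqnorm n p = 1 \<and> (\<forall>v<n. 0 < p v)
     \<and> (\<forall>v<n. star_sum E p v = S * p v)
     \<and> (\<forall>y. supported n y \<longrightarrow> qform E y \<le> S * sqnorm n y) \<and> qform E p = S"
proof -
  have n: "n \<ge> 1" using t unfolding tree_on_def by (auto simp: lessThan_empty_iff)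
  note ed = tree_on_edges[OF t]
  have con: "\<forall>u<n. \<forall>v<n. (adj E)\<^sup>*\<^sup>* u v" using t unfolding tree_on_def by blast
  obtain z where z: "supported n z" "sqnorm n z = 1"
    and maxS: "\<forall>y. supported n y \<longrightarrow> qform E y \<le> qform E z * sqnorm n y"
    using rayleigh_max_exists[OF n] ed(2) by blast
  define p where "p = (\<lambda>i. \<bar>z i\<bar>)"
  have pnn: "\<forall>i. 0 \<le> p i" unfolding p_def by simp
  have sp: "supported n p" using z(1) unfolding supported_def p_def by simp
  have np: "sqnorm n p = 1" using z(2) unfolding sqnorm_def p_def by simp
  \<comment> \<open>replacing z by |z| cannot decrease qform, so |z| is a maximiser as well\<close>
  have "qform E z \<le> qform E p" unfolding qform_def
  proof (rule sum_mono)
    fix e assume "e \<in> E"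
    have "\<bar>esum z e\<bar> \<le> esum p e" unfolding esum_def p_def by (rule sum_abs)
    then have "\<bar>esum z e\<bar>^2 \<le> (esum p e)^2" by (rule power_mono) simp
    then show "(esum z e)^2 \<le> (esum p e)^2" by simp
  qed
  moreover have "qform E p \<le> qform E z" using maxS sp np by (metis mult.right_neutral)
  ultimately have qp: "qform E p = qform E z" by simp
  have eig: "\<forall>v<n. star_sum E p v = qform E z * p v"
    using variation[OF ed(1) ed(3) _ sp maxS] qp np by simp
  have "\<forall>v<n. 0 < p v" using positivity[OF ed(2) ed(1) con pnn eig np] by blast
  then show ?thesis using pnn sp np eig maxS qp by blast
qed

text \<open>For a 2-coloured graph, flipping the sign of p on one colour class turns a
  solution of the signless eigen-equation into a Laplacian eigenvector.\<close>
lemma signed_eigenvector: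
  fixes c :: "nat \<Rightarrow> bool"
  assumes ed: "\<forall>e\<in>E. card e = 2 \<and> e \<subseteq> {..<n}" and finE: "finite E" and n: "n \<ge> 1"
    and c: "\<forall>e\<in>E. \<forall>i\<in>e. \<forall>j\<in>e. i \<noteq> j \<longrightarrow> c i \<noteq> c j"
    and pos: "\<forall>v<n. 0 < p v" and eig: "\<forall>v<n. star_sum E p v = S * p v"
  shows "eigenvalue (laplacian n E) S"
proof -
  define sg where "sg = (\<lambda>i. if c i then 1 else (-1::real))"
  define x where "x = (\<lambda>i. sg i * p i)"
  let ?L = "laplacian n E"
  have dr: "dim_row ?L = n" unfolding laplacian_def by simp
  have edge_term: "2 * x i - esum x e = sg i * esum p e" if e: "e \<in> E" "i \<in> e" for e i
  proof -
    obtain a b where ab: "e = {a, b}" "a \<noteq> b" using card2_pair ed e by blast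
    define j where "j = (if a = i then b else a)"
    have ej: "e = {i, j}" "i \<noteq> j" using ab e unfolding j_def by auto
    have "c i \<noteq> c j" using c[rule_format, OF e(1)] ej by auto
    then have "sg j = - sg i" unfolding sg_def by auto
    then show ?thesis using ej unfolding x_def by (simp add: esum_pair algebra_simps)
  qed
  have row: "(?L *\<^sub>v vec n x) $ i = S * x i" if i: "i < n" for i
  proof -
    have "(?L *\<^sub>v vec n x) $ i = (\<Sum>e\<in>{e\<in>E. i \<in> e}. 2 * vec n x $ i - esum (\<lambda>k. vec n x $ k) e)"
      by (rule lap_mult[OF ed finE i]) simp
    also have "\<dots> = (\<Sum>e\<in>{e\<in>E. i \<in> e}. 2 * x i - esum x e)"
    proof (rule sum.cong)
      fix e assume e: "e \<in> {e\<in>E. i \<in> e}"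
      have esub: "e \<subseteq> {..<n}" using ed e by blast
      have "esum (\<lambda>k. vec n x $ k) e = esum x e" unfolding esum_def
        by (rule sum.cong) (use esub in auto)
      then show "2 * vec n x $ i - esum (\<lambda>k. vec n x $ k) e = 2 * x i - esum x e" using i by simp
    qed simp
    also have "\<dots> = sg i * star_sum E p i"
      unfolding star_sum_def by (simp add: edge_term sum_distrib_left)
    finally show ?thesis using eig i unfolding x_def by simp
  qed
  have "vec n x $ 0 \<noteq> 0" using n pos unfolding x_def sg_def by auto
  have "vec n x \<noteq> 0\<^sub>v n"
  proof
    assume "vec n x = 0\<^sub>v n"
    then have "vec n x $ 0 = 0\<^sub>v n $ 0" by simp
    then show False using n \<open>vec n x $ 0 \<noteq> 0\<close> by simp
  qed
  moreover have "?L *\<^sub>v vec n x = S \<cdot>\<^sub>v vec n x"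
  proof (rule eq_vecI)
    fix i assume "i < dim_vec (S \<cdot>\<^sub>v vec n x)"
    then show "(?L *\<^sub>v vec n x) $ i = (S \<cdot>\<^sub>v vec n x) $ i" using row by simp
  qed (simp add: laplacian_def)
  ultimately have "eigenvector ?L (vec n x) S" unfolding eigenvector_def dr by simp
  then show ?thesis unfolding eigenvalue_def by blast
qed

lemma eigenvalue_le_rayleigh:
  fixes c :: "nat \<Rightarrow> bool"
  assumes ed: "\<forall>e\<in>E. card e = 2 \<and> e \<subseteq> {..<n}" and finE: "finite E"
    and c: "\<forall>e\<in>E. \<forall>i\<in>e. \<forall>j\<in>e. i \<noteq> j \<longrightarrow> c i \<noteq> c j"
    and maxS: "\<forall>y. supported n y \<longrightarrow> qform E y \<le> S * sqnorm n y"
    and mu: "eigenvalue (laplacian n E) \<mu>"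
  shows "\<mu> \<le> S"
proof -
  let ?L = "laplacian n E"
  define sg where "sg = (\<lambda>i. if c i then 1 else (-1::real))"
  obtain v where "eigenvector ?L v \<mu>" using mu unfolding eigenvalue_def by blast
  then have v: "v \<in> carrier_vec n" "v \<noteq> 0\<^sub>v n" "?L *\<^sub>v v = \<mu> \<cdot>\<^sub>v v"
    unfolding eigenvector_def laplacian_def by auto
  have dv: "dim_vec v = n" using v(1) by simp
  define w where "w = (\<lambda>k. if k < n then v $ k else 0)"
  have "lform E (\<lambda>k. v $ k) = (\<Sum>i<n. v $ i * (?L *\<^sub>v v) $ i)"
    using quad_lap[OF ed finE dv] by simp
  also have "\<dots> = (\<Sum>i<n. \<mu> * (v $ i)^2)"
    using v(3) dv by (intro sum.cong) (auto simp: power2_eq_square)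
  also have "\<dots> = \<mu> * sqnorm n w" unfolding sqnorm_def w_def by (simp add: sum_distrib_left)
  finally have 1: "lform E (\<lambda>k. v $ k) = \<mu> * sqnorm n w" .
  have "lform E (\<lambda>k. v $ k) = lform E w"
    by (rule lform_cong) (use ed in \<open>auto simp: w_def\<close>)
  also have "\<dots> = qform E (\<lambda>i. sg i * w i)"
    unfolding sg_def using lform_bipartite[OF _ c] ed by simp
  also have "\<dots> \<le> S * sqnorm n (\<lambda>i. sg i * w i)"
    using maxS unfolding supported_def w_def by auto
  also have "sqnorm n (\<lambda>i. sg i * w i) = sqnorm n w"
    unfolding sqnorm_def sg_def by (intro sum.cong) (auto simp: power2_eq_square)
  finally have 2: "\<mu> * sqnorm n w \<le> S * sqnorm n w" using 1 by simp
  have "sqnorm n w \<noteq> 0"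
  proof
    assume "sqnorm n w = 0"
    then have "\<forall>i<n. w i = 0" using sqnorm_zero by blast
    then have "v = 0\<^sub>v n" using dv unfolding w_def by (intro eq_vecI) auto
    then show False using v(2) by simp
  qed
  then have "sqnorm n w > 0" using sqnorm_nonneg[of n w] by simp
  then show ?thesis using 2 by simp
qed

lemma spectral:
  assumes t: "tree_on {..<n} E"
  shows "\<exists>p. (\<forall>i. 0 \<le> p i) \<and> supported n p \<and> sqnorm n p = 1 \<and> (\<forall>v<n. 0 < p v)
     \<and> (\<forall>v<n. star_sum E p v = lambda_max n E * p v)
     \<and> (\<forall>y. supported n y \<longrightarrow> qform E y \<le> lambda_max n E * sqnorm n y) \<and> qform E p = lambda_max n E"
proof -
  obtain S p where p: "\<forall>i. 0 \<le> p i" "supported n p" "sqnorm n p = 1" "\<forall>v<n. 0 < p v"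
     "\<forall>v<n. star_sum E p v = S * p v" "\<forall>y. supported n y \<longrightarrow> qform E y \<le> S * sqnorm n y" "qform E p = S"
    using perron_vector[OF t] by blast
  have n: "n \<ge> 1" using t unfolding tree_on_def by (auto simp: lessThan_empty_iff)
  note ed = tree_on_edges[OF t]
  obtain c :: "nat \<Rightarrow> bool" where c: "\<forall>e\<in>E. \<forall>i\<in>e. \<forall>j\<in>e. i \<noteq> j \<longrightarrow> c i \<noteq> c j"
    using tree_bipartite[OF t] by blast
  have "eigenvalue (laplacian n E) S" using signed_eigenvector[OF ed(2) ed(1) n c p(4,5)] by blast
  moreover have "\<mu> \<le> S" if "eigenvalue (laplacian n E) \<mu>" for \<mu>
    using eigenvalue_le_rayleigh[OF ed(2) ed(1) c p(6) that] by blast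
  moreover have "finite {\<mu>. eigenvalue (laplacian n E) \<mu>}"
    by (rule finite_eigenvalues[where n = n]) (simp add: laplacian_def)
  ultimately have "lambda_max n E = S" unfolding lambda_max_def by (intro Max_eqI) auto
  then show ?thesis using p by blast
qed

section \<open>Edge rotations\<close>

lemma rotate_edge_tree:
  assumes t: "tree_on V E" and bw: "{b, w} \<in> E" and a: "a \<in> V" "a \<noteq> b"
    and nr: "\<not> (adj (E - {{b, w}}))\<^sup>*\<^sup>* a w"
  shows "tree_on V (insert {a, w} (E - {{b, w}})) \<and> {a, w} \<notin> E \<and> a \<noteq> w \<and> b \<noteq> w"
proof -
  let ?F = "E - {{b, w}}"
  let ?E' = "insert {a, w} ?F"
  have fin: "finite V" "V \<noteq> {}" and ed: "\<forall>e\<in>E. card e = 2 \<and> e \<subseteq> V"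
    and con: "\<forall>u\<in>V. \<forall>v\<in>V. (adj E)\<^sup>*\<^sup>* u v" and cE: "card E = card V - 1"
    using t unfolding tree_on_def by auto
  have finE: "finite E" using tree_on_edges(1)[OF t] .
  have bwV: "card {b, w} = 2" "{b, w} \<subseteq> V" using ed bw by auto
  then have bnw: "b \<noteq> w" by auto
  have anw: "a \<noteq> w" using nr by auto
  have awE: "{a, w} \<notin> E"
  proof
    assume "{a, w} \<in> E"
    moreover have "{a, w} \<noteq> {b, w}" using a(2) anw by (auto simp: doubleton_eq_iff)
    ultimately have "{a, w} \<in> ?F" by simp
    then show False using nr reach_edge by metis
  qed
  have ed': "\<forall>e\<in>?E'. card e = 2 \<and> e \<subseteq> V" using ed anw a bwV by auto
  have "card ?E' = card ?F + 1" using awE finE by simp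
  also have "card ?F = card E - 1" using bw finE by simp
  finally have c1: "card ?E' = card E - 1 + 1" .
  have "card E > 0" using bw finE card_gt_0_iff by blast
  then have cE': "card ?E' = card V - 1" using cE c1 by simp
  have toB: "(adj ?F)\<^sup>*\<^sup>* u b \<or> (adj ?F)\<^sup>*\<^sup>* u w" if u: "u \<in> V" for u
  proof -
    have "b \<in> V" using bwV by simp
    then have "(adj E)\<^sup>*\<^sup>* u b" using con u by blast
    from reach_remove_edge[OF this, of b w] show ?thesis by blast
  qed
  have ab: "(adj ?F)\<^sup>*\<^sup>* a b" using toB[OF a(1)] nr by blast
  have sub: "?F \<subseteq> ?E'" by auto
  have ab': "(adj ?E')\<^sup>*\<^sup>* a b" using reach_mono[OF sub ab] .
  have wa: "(adj ?E')\<^sup>*\<^sup>* w a" using reach_edge[of w a ?E'] by (simp add: insert_commute)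
  have allb: "(adj ?E')\<^sup>*\<^sup>* u b" if u: "u \<in> V" for u
  proof -
    from toB[OF u] show ?thesis
    proof
      assume "(adj ?F)\<^sup>*\<^sup>* u b" then show ?thesis using reach_mono[OF sub] by blast
    next
      assume "(adj ?F)\<^sup>*\<^sup>* u w"
      then have "(adj ?E')\<^sup>*\<^sup>* u w" using reach_mono[OF sub] by blast
      then show ?thesis using wa ab' reach_trans by metis
    qed
  qed
  have con': "\<forall>u\<in>V. \<forall>v\<in>V. (adj ?E')\<^sup>*\<^sup>* u v"
    using allb reach_sym reach_trans by metis
  have "tree_on V ?E'" unfolding tree_on_def using fin ed' con' cE' by blast
  then show ?thesis using awE anw bnw by blast
qed

lemma deg_rotate:
  assumes finE: "finite E" and bw: "{b, w} \<in> E" and aw: "{a, w} \<notin> E"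
  shows "deg (insert {a, w} (E - {{b, w}})) v + (if v \<in> {b, w} then 1 else 0)
       = deg E v + (if v \<in> {a, w} then 1 else 0)"
proof -
  let ?A = "{e\<in>E. v \<in> e}"
  have f: "finite ?A" using finE by simp
  have c1: "card (?A - {{b, w}}) + (if v \<in> {b, w} then 1 else 0) = card ?A"
  proof (cases "v \<in> {b, w}")
    case True
    then have "{b, w} \<in> ?A" using bw by simp
    moreover have "card ?A > 0" using f \<open>{b, w} \<in> ?A\<close> card_gt_0_iff by blast
    ultimately show ?thesis using f True by (simp add: card_Diff_singleton)
  next
    case False
    then have "{b, w} \<notin> ?A" by simp
    then show ?thesis using False by simp
  qed
  have m: "{a, w} \<notin> ?A - {{b, w}}" using aw by simp
  have "deg (insert {a, w} (E - {{b, w}})) v = card (?A - {{b, w}}) + (if v \<in> {a, w} then 1 else 0)"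
  proof (cases "v \<in> {a, w}")
    case True
    then have "{e\<in>insert {a, w} (E - {{b, w}}). v \<in> e} = insert {a, w} (?A - {{b, w}})" by blast
    then have "deg (insert {a, w} (E - {{b, w}})) v = card (insert {a, w} (?A - {{b, w}}))"
      unfolding deg_def by simp
    also have "\<dots> = card (?A - {{b, w}}) + 1"
    proof -
      have "finite (?A - {{b, w}})" using f by simp
      from card_insert_disjoint[OF this m] show ?thesis by simp
    qed
    finally show ?thesis using True by simp
  next
    case False
    then have "{e\<in>insert {a, w} (E - {{b, w}}). v \<in> e} = ?A - {{b, w}}" by blast
    then show ?thesis unfolding deg_def using False by simp
  qed
  then show ?thesis using c1 unfolding deg_def by simp
qed

lemma qform_rotate:
  assumes finE: "finite E" and bw: "{b, w} \<in> E" and aw: "{a, w} \<notin> E"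
  shows "qform (insert {a, w} (E - {{b, w}})) p + (esum p {b, w})^2 = qform E p + (esum p {a, w})^2"
proof -
  have "qform (insert {a, w} (E - {{b, w}})) p = (esum p {a, w})^2 + qform (E - {{b, w}}) p"
    unfolding qform_def using finE aw by simp
  moreover have "qform (E - {{b, w}}) p + (esum p {b, w})^2 = qform E p"
    unfolding qform_def using finE bw by (simp add: sum_diff1)
  ultimately show ?thesis by simp
qed

lemma star_sum_rotate:
  assumes finE: "finite E" and aw: "{a, w} \<notin> E" and ab: "a \<noteq> b" "a \<noteq> w"
  shows "star_sum (insert {a, w} (E - {{b, w}})) p a = star_sum E p a + esum p {a, w}"
proof -
  have "{e\<in>insert {a, w} (E - {{b, w}}). a \<in> e} = insert {a, w} {e\<in>E. a \<in> e}"
    using ab by auto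
  moreover have "{a, w} \<notin> {e\<in>E. a \<in> e}" using aw by simp
  ultimately show ?thesis unfolding star_sum_def using finE by simp
qed

text \<open>A vertex b of degree at least 2 has a neighbour w that is cut off from any
  other vertex a by deleting {b,w}; this makes a rotation from b to a possible.\<close>
lemma rotatable_neighbour:
  assumes t: "tree_on V E" and a: "a \<noteq> b" and d: "deg E b \<ge> 2"
  shows "\<exists>w. {b, w} \<in> E \<and> \<not> (adj (E - {{b, w}}))\<^sup>*\<^sup>* a w"
proof -
  have finE: "finite E" using tree_on_edges(1)[OF t] .
  have ed: "\<forall>e\<in>E. card e = 2 \<and> e \<subseteq> V" using t unfolding tree_on_def by blast
  let ?A = "{e\<in>E. b \<in> e}"
  have cA: "card ?A \<ge> 2" using d unfolding deg_def .
  have "0 < card ?A" using cA by simp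
  then have "?A \<noteq> {}" using card_gt_0_iff by blast
  then obtain e1 where e1: "e1 \<in> ?A" by blast
  have c1: "card (?A - {e1}) \<ge> 1" using cA e1 finE by simp
  have "0 < card (?A - {e1})" using c1 by simp
  then have "?A - {e1} \<noteq> {}" using card_gt_0_iff by blast
  then obtain e2 where e2: "e2 \<in> ?A" "e2 \<noteq> e1" by blast
  have nbr: "\<exists>w. e = {b, w}" if "e \<in> ?A" for e
  proof -
    have "card e = 2" using ed that by auto
    then obtain x y where xy: "e = {x, y}" "x \<noteq> y" using card2_pair by blast
    then show ?thesis using that by (cases "x = b") (auto simp: insert_commute)
  qed
  obtain w1 where w1: "e1 = {b, w1}" using nbr e1 by blast
  obtain w2 where w2: "e2 = {b, w2}" using nbr e2 by blast
  have w12: "w1 \<noteq> w2" using w1 w2 e2(2) by auto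
  have bw1: "{b, w1} \<in> E" and bw2: "{b, w2} \<in> E" using e1 e2 w1 w2 by auto
  show ?thesis
  proof (rule ccontr)
    assume "\<not> ?thesis"
    then have r1: "(adj (E - {{b, w1}}))\<^sup>*\<^sup>* a w1" and r2: "(adj (E - {{b, w2}}))\<^sup>*\<^sup>* a w2"
      using bw1 bw2 by auto
    have c1: "\<not> (adj (E - {{b, w1}}))\<^sup>*\<^sup>* b w1" using tree_bridge[OF t] bw1 by blast
    have c2: "\<not> (adj (E - {{b, w2}}))\<^sup>*\<^sup>* b w2" using tree_bridge[OF t] bw2 by blast
    have s1: "E - {{b, w2}} - {{b, w1}} \<subseteq> E - {{b, w1}}" by auto
    have s2: "E - {{b, w2}} - {{b, w1}} \<subseteq> E - {{b, w2}}" by auto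
    have n12: "{b, w2} \<noteq> {b, w1}" using w12 by (auto simp: doubleton_eq_iff)
    have adj1: "{w2, b} \<in> E - {{b, w1}}" using bw2 n12 by (auto simp: insert_commute)
    have adj2: "{w1, b} \<in> E - {{b, w2}}" using bw1 n12 by (auto simp: insert_commute)
    have case2: False if h: "(adj (E - {{b, w2}}))\<^sup>*\<^sup>* a b"
      using c2 reach_sym[OF h] r2 reach_trans by metis
    from reach_remove_edge[OF r2, of b w1] show False
    proof (elim disjE)
      assume "(adj (E - {{b, w2}} - {{b, w1}}))\<^sup>*\<^sup>* a w2"
      then have "(adj (E - {{b, w1}}))\<^sup>*\<^sup>* a w2" using reach_mono[OF s1] by blast
      then have "(adj (E - {{b, w1}}))\<^sup>*\<^sup>* a b" using reach_edge[OF adj1] reach_trans by metis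
      then show False using c1 reach_sym r1 reach_trans by metis
    next
      assume "(adj (E - {{b, w2}} - {{b, w1}}))\<^sup>*\<^sup>* a b"
      then show False using reach_mono[OF s2] case2 by blast
    next
      assume "(adj (E - {{b, w2}} - {{b, w1}}))\<^sup>*\<^sup>* a w1"
      then have "(adj (E - {{b, w2}}))\<^sup>*\<^sup>* a w1" using reach_mono[OF s2] by blast
      then have "(adj (E - {{b, w2}}))\<^sup>*\<^sup>* a b" using reach_edge[OF adj2] reach_trans by metis
      then show False using case2 by blast
    qed
  qed
qed

lemma rotate_edges:
  assumes t: "tree_on V E" and pnn: "\<forall>i. 0 \<le> p i" and a: "a \<in> V" and ab: "a \<noteq> b"
    and pab: "p b \<le> p a" and k: "k < deg E b"
  shows "\<exists>E'. tree_on V E' \<and> qform E p \<le> qform E' p \<and> deg E' a = deg E a + k \<and> deg E' b + k = deg E b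
     \<and> (\<forall>v. v \<noteq> a \<longrightarrow> v \<noteq> b \<longrightarrow> deg E' v = deg E v) \<and> star_sum E p a + k * p a \<le> star_sum E' p a"
  using k
proof (induction k)
  case 0 then show ?case using t by auto
next
  case (Suc k)
  then obtain Ek where Ek: "tree_on V Ek" "qform E p \<le> qform Ek p" "deg Ek a = deg E a + k" "deg Ek b + k = deg E b"
     "\<forall>v. v \<noteq> a \<longrightarrow> v \<noteq> b \<longrightarrow> deg Ek v = deg E v" "star_sum E p a + k * p a \<le> star_sum Ek p a"
    by auto
  have "deg Ek b \<ge> 2" using Ek(4) Suc(2) by simp
  then obtain w where w: "{b, w} \<in> Ek" "\<not> (adj (Ek - {{b, w}}))\<^sup>*\<^sup>* a w"
    using rotatable_neighbour[OF Ek(1) ab] by blast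
  define E' where "E' = insert {a, w} (Ek - {{b, w}})"
  have sm: "tree_on V E'" "{a, w} \<notin> Ek" "a \<noteq> w" "b \<noteq> w"
    using rotate_edge_tree[OF Ek(1) w(1) a ab w(2)] unfolding E'_def by auto
  have finEk: "finite Ek" using tree_on_edges(1)[OF Ek(1)] .
  have dm: "deg E' v + (if v \<in> {b, w} then 1 else 0) = deg Ek v + (if v \<in> {a, w} then 1 else 0)" for v
    unfolding E'_def by (rule deg_rotate[OF finEk w(1) sm(2)])
  have da: "deg E' a = deg Ek a + 1" using dm[of a] ab sm(3) by simp
  have db: "deg E' b + 1 = deg Ek b" using dm[of b] ab sm(4) by simp
  have dv: "deg E' v = deg Ek v" if "v \<noteq> a" "v \<noteq> b" for v using dm[of v] that by auto
  have "qform E' p + (esum p {b, w})^2 = qform Ek p + (esum p {a, w})^2"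
    unfolding E'_def by (rule qform_rotate[OF finEk w(1) sm(2)])
  moreover have "(esum p {b, w})^2 \<le> (esum p {a, w})^2"
    using sm pab pnn by (simp add: esum_pair power_mono)
  ultimately have q: "qform Ek p \<le> qform E' p" by simp
  have "star_sum E' p a = star_sum Ek p a + esum p {a, w}"
    unfolding E'_def by (rule star_sum_rotate[OF finEk sm(2) ab sm(3)])
  moreover have "esum p {a, w} \<ge> p a" using sm pnn by (simp add: esum_pair)
  ultimately have at: "star_sum Ek p a + p a \<le> star_sum E' p a" by simp
  show ?case
    apply (rule exI[of _ E'])
    using sm(1) Ek q da db dv at by (auto simp: algebra_simps)
qed

section \<open>Two operations that strictly increase lambda\<close>

text \<open>Let p be the Perron vector of G. If a tree H on the same vertices has
  qform H p \<ge> qform G p and the eigen-equation of G at a is violated in H by k * p a,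
  then lambda(G) < lambda(H): otherwise p would also be a maximiser for H and would
  satisfy H's eigen-equation at a.\<close>
lemma lambda_strict_increase:
  fixes k :: nat and p :: "nat \<Rightarrow> real"
  assumes tH: "tree_on {..<n} H" and a: "a < n"
    and p: "supported n p" "sqnorm n p = 1" "0 < p a"
      "star_sum G p a = lambda_max n G * p a" "qform G p = lambda_max n G"
    and q: "qform G p \<le> qform H p" and at: "star_sum G p a + k * p a \<le> star_sum H p a"
    and k: "k \<ge> 1"
  shows "lambda_max n G < lambda_max n H"
proof (rule ccontr)
  define S where "S = lambda_max n G"
  assume "\<not> ?thesis"
  then have le: "lambda_max n H \<le> S" unfolding S_def by simp
  have pH: "\<forall>y. supported n y \<longrightarrow> qform H y \<le> lambda_max n H * sqnorm n y"
    using spectral[OF tH] by blast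
  have maxH: "\<forall>y. supported n y \<longrightarrow> qform H y \<le> S * sqnorm n y"
  proof (intro allI impI)
    fix y assume "supported n y"
    then have "qform H y \<le> lambda_max n H * sqnorm n y" using pH by blast
    also have "\<dots> \<le> S * sqnorm n y" using le sqnorm_nonneg[of n y] by (simp add: mult_right_mono)
    finally show "qform H y \<le> S * sqnorm n y" .
  qed
  have "qform H p \<le> S" using maxH p(1,2) by (metis mult.right_neutral)
  then have "qform H p = S * sqnorm n p" using q p(2,5) unfolding S_def by simp
  then have "star_sum H p a = S * p a"
    using variation[OF tree_on_edges(1,3)[OF tH] a p(1) maxH] by blast
  then show False using at k p(3,4) unfolding S_def
    by (smt (verit, ccfv_SIG) mult_le_cancel_right1 of_nat_1 of_nat_le_iff)
qed

text \<open>Rotate one edge from v to u, or, if p u < p v, rotate deg u - deg v + 1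
  edges from u to v.\<close>
lemma transfer_step:
  assumes t: "tree_on {..<n} G" and uv: "u < n" "v < n" "u \<noteq> v"
    and d: "deg G v \<le> deg G u" "2 \<le> deg G v"
  shows "\<exists>H. tree_on {..<n} H \<and> lambda_max n G < lambda_max n H
    \<and> (\<forall>z. z \<noteq> u \<longrightarrow> z \<noteq> v \<longrightarrow> deg H z = deg G z)
    \<and> add_mset (deg H u) {#deg H v#} = add_mset (deg G u + 1) {#deg G v - 1#}"
proof -
  obtain p where p: "\<forall>i. 0 \<le> p i" "supported n p" "sqnorm n p = 1" "\<forall>v<n. 0 < p v"
     "\<forall>v<n. star_sum G p v = lambda_max n G * p v" "qform G p = lambda_max n G"
    using spectral[OF t] by blast
  note strict = lambda_strict_increase[OF _ _ p(2,3) _ _ p(6)]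
  show ?thesis
  proof (cases "p v \<le> p u")
    case True
    have "1 < deg G v" using d by simp
    then obtain H where H: "tree_on {..<n} H" "qform G p \<le> qform H p" "deg H u = deg G u + 1"
       "deg H v + 1 = deg G v" "\<forall>z. z \<noteq> u \<longrightarrow> z \<noteq> v \<longrightarrow> deg H z = deg G z"
       "star_sum G p u + 1 * p u \<le> star_sum H p u"
      using rotate_edges[OF t p(1) _ uv(3) True, of 1] uv by auto
    have "star_sum G p u + real (1::nat) * p u \<le> star_sum H p u" using H(6) by simp
    moreover have "0 < p u" "star_sum G p u = lambda_max n G * p u" using p(4,5) uv(1) by blast+
    ultimately have "lambda_max n G < lambda_max n H"
      using strict[where k = 1, OF H(1) uv(1) _ _ H(2)] by simp
    moreover have "add_mset (deg H u) {#deg H v#} = add_mset (deg G u + 1) {#deg G v - 1#}"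
      using H(3,4) by simp
    ultimately show ?thesis using H(1,5) by blast
  next
    case False
    define k where "k = deg G u - deg G v + 1"
    have k: "k < deg G u" "k \<ge> 1" using d unfolding k_def by auto
    obtain H where H: "tree_on {..<n} H" "qform G p \<le> qform H p" "deg H v = deg G v + k"
       "deg H u + k = deg G u" "\<forall>z. z \<noteq> v \<longrightarrow> z \<noteq> u \<longrightarrow> deg H z = deg G z"
       "star_sum G p v + k * p v \<le> star_sum H p v"
      using rotate_edges[OF t p(1) _ uv(3)[symmetric] _ k(1)] uv False by auto
    have "lambda_max n G < lambda_max n H"
      using strict[OF H(1) uv(2) _ _ H(2,6) k(2)] p(4,5) uv(2) by blast
    moreover have "deg H v = deg G u + 1" "deg H u = deg G v - 1"
      using H(3,4) d unfolding k_def by auto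
    then have "add_mset (deg H u) {#deg H v#} = add_mset (deg G u + 1) {#deg G v - 1#}"
      by (simp add: add_mset_commute)
    ultimately show ?thesis using H(1,5) by blast
  qed
qed

lemma attach_pendant:
  assumes t: "tree_on {..<n} G" and u: "u < n"
  shows "tree_on {..<Suc n} (insert {u, n} G)" and "{u, n} \<notin> G"
    and "deg (insert {u, n} G) u = deg G u + 1" and "deg (insert {u, n} G) n = 1"
    and "\<And>z. z < n \<Longrightarrow> z \<noteq> u \<Longrightarrow> deg (insert {u, n} G) z = deg G z"
proof -
  define H where "H = insert {u, n} G"
  have finG: "finite G" and ed: "\<forall>e\<in>G. card e = 2 \<and> e \<subseteq> {..<n}" using tree_on_edges[OF t] by auto
  have con: "\<forall>x<n. \<forall>y<n. (adj G)\<^sup>*\<^sup>* x y" and cG: "card G = n - 1" and n1: "n \<ge> 1"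
    using t unfolding tree_on_def by (auto simp: lessThan_empty_iff)
  have un: "u \<noteq> n" using u by simp
  show nG: "{u, n} \<notin> G" using ed by auto
  have edG: "card e = 2 \<and> e \<subseteq> {..<Suc n}" if "e \<in> G" for e
  proof -
    have "card e = 2" "e \<subseteq> {..<n}" using ed that by blast+
    then show ?thesis by auto
  qed
  have edH: "\<forall>e\<in>H. card e = 2 \<and> e \<subseteq> {..<Suc n}" using edG un u unfolding H_def by auto
  have cH: "card H = Suc n - 1" unfolding H_def using nG finG cG n1 by simp
  have sub: "G \<subseteq> H" unfolding H_def by auto
  have tou: "(adj H)\<^sup>*\<^sup>* x u" if "x < Suc n" for x
  proof (cases "x = n")
    case True then show ?thesis using reach_edge[of n u H] unfolding H_def by (simp add: insert_commute)
  next
    case False then have "x < n" using that by simp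
    then show ?thesis using con u reach_mono[OF sub] by blast
  qed
  have "\<forall>x<Suc n. \<forall>y<Suc n. (adj H)\<^sup>*\<^sup>* x y"
    using tou reach_sym reach_trans by metis
  then show "tree_on {..<Suc n} (insert {u, n} G)"
    unfolding tree_on_def H_def[symmetric] using edH cH by auto
  show "deg (insert {u, n} G) z = deg G z" if "z < n" "z \<noteq> u" for z
  proof -
    have "{e\<in>H. z \<in> e} = {e\<in>G. z \<in> e}" unfolding H_def using that by auto
    then show ?thesis unfolding deg_def H_def by simp
  qed
  have "{e\<in>H. u \<in> e} = insert {u, n} {e\<in>G. u \<in> e}" unfolding H_def by auto
  then show "deg (insert {u, n} G) u = deg G u + 1" unfolding deg_def H_def using finG nG by simp
  have "{e\<in>H. n \<in> e} = {{u, n}}" unfolding H_def using ed by auto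
  then show "deg (insert {u, n} G) n = 1" unfolding deg_def H_def by simp
qed

text \<open>Attaching a pendant vertex strictly increases lambda: the Perron vector of G,
  extended by 0, already gains (p u)^2 in the signless form.\<close>
lemma pendant_step:
  assumes t: "tree_on {..<n} G" and u: "u < n"
  shows "lambda_max n G < lambda_max (Suc n) (insert {u, n} G)"
proof -
  define H where "H = insert {u, n} G"
  note H = attach_pendant[OF t u, folded H_def]
  obtain p where p: "supported n p" "sqnorm n p = 1" "\<forall>v<n. 0 < p v" "qform G p = lambda_max n G"
    using spectral[OF t] by blast
  have q: "\<forall>y. supported (Suc n) y \<longrightarrow> qform H y \<le> lambda_max (Suc n) H * sqnorm (Suc n) y"
    using spectral[OF H(1)] by blast
  have pn: "p n = 0" using p(1) unfolding supported_def by simp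
  have "qform H p = (esum p {u, n})^2 + qform G p"
    unfolding H_def qform_def using H(2) tree_on_edges(1)[OF t] by simp
  also have "esum p {u, n} = p u" using u pn by (simp add: esum_pair)
  finally have qH: "qform H p = (p u)^2 + lambda_max n G" using p(4) by simp
  have "sqnorm (Suc n) p = 1" using p(2) pn unfolding sqnorm_def by simp
  moreover have "supported (Suc n) p" using p(1) unfolding supported_def by simp
  ultimately have "qform H p \<le> lambda_max (Suc n) H" using q by (metis mult.right_neutral)
  moreover have "p u > 0" using p(3) u by blast
  then have "(p u)^2 > 0" by simp
  ultimately show ?thesis using qH unfolding H_def by linarith
qed

section \<open>Degree sequences\<close>

lemma degree_seq_tree:
  assumes t: "tree_on {..<n} E"
  shows "length (degree_seq n E) = n" "sorted (rev (degree_seq n E))"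
    "mset (degree_seq n E) = mset (map (deg E) [0..<n])"
    "sum_list (degree_seq n E) = 2 * (n - 1)"
    "n \<ge> 2 \<Longrightarrow> \<forall>x\<in>set (degree_seq n E). x \<ge> 1" "n \<ge> 1"
proof -
  show "length (degree_seq n E) = n" unfolding degree_seq_def by simp
  show "sorted (rev (degree_seq n E))" unfolding degree_seq_def by simp
  show ms: "mset (degree_seq n E) = mset (map (deg E) [0..<n])" unfolding degree_seq_def by simp
  have finE: "finite E" and ed: "\<forall>e\<in>E. card e = 2 \<and> e \<subseteq> {..<n}" using tree_on_edges[OF t] by auto
  have cE: "card E = n - 1" using t unfolding tree_on_def by simp
  have "sum_list (degree_seq n E) = sum_list (map (deg E) [0..<n])"
    using ms by (metis sum_mset_sum_list)
  also have "\<dots> = (\<Sum>v\<in>{..<n}. deg E v)" by (simp add: sum_list_distinct_conv_sum_set atLeast0LessThan)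
  also have "\<dots> = (\<Sum>e\<in>E. card e)" using sum_deg[of "{..<n}" E] finE ed by auto
  also have "\<dots> = 2 * card E" using ed by simp
  finally show "sum_list (degree_seq n E) = 2 * (n - 1)" using cE by simp
  show "n \<ge> 1" using t unfolding tree_on_def by (auto simp: lessThan_empty_iff)
  assume n2: "n \<ge> 2"
  show "\<forall>x\<in>set (degree_seq n E). x \<ge> 1"
  proof
    fix x assume "x \<in> set (degree_seq n E)"
    then have "x \<in># mset (map (deg E) [0..<n])" using ms by (metis set_mset_mset)
    then obtain v where v: "v < n" "x = deg E v" by auto
    have "card {..<n} \<ge> 2" using n2 by simp
    then obtain e where e: "e \<in> E" "v \<in> e" using tree_has_edge_at[OF t _ ] v by blast
    have "finite {e\<in>E. v \<in> e}" using finE by simp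
    moreover have "{e\<in>E. v \<in> e} \<noteq> {}" using e by blast
    ultimately have "card {e\<in>E. v \<in> e} > 0" by (simp add: card_gt_0_iff)
    then show "x \<ge> 1" using v unfolding deg_def by simp
  qed
qed

lemma degree_seq_eqI:
  assumes "sorted (rev xs)" "mset xs = mset (map (deg E) [0..<n])"
  shows "degree_seq n E = xs"
proof -
  have "sort (map (deg E) [0..<n]) = rev xs"
    by (rule properties_for_sort) (use assms in simp_all)
  then show ?thesis unfolding degree_seq_def by simp
qed

lemma mset_map_upd1:
  assumes x: "x < n" and g: "\<forall>z<n. z \<noteq> x \<longrightarrow> g z = f z"
  shows "mset (map g [0..<n]) + {#f x#} = mset (map f [0..<n]) + {#g x#}"
proof -
  have "map g [0..<n] = (map f [0..<n])[x := g x]"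
    using g x by (intro nth_equalityI) (auto simp: nth_list_update)
  then have "mset (map g [0..<n]) = add_mset (g x) (mset (map f [0..<n]) - {#f x#})"
    using x by (simp add: mset_update)
  moreover have "f x \<in># mset (map f [0..<n])" using x by simp
  ultimately show ?thesis by (simp add: insert_DiffM2)
qed

lemma mset_map_upd2:
  assumes x: "x < n" and y: "y < n" and xy: "x \<noteq> y" and g: "\<forall>z<n. z \<noteq> x \<longrightarrow> z \<noteq> y \<longrightarrow> g z = f z"
  shows "mset (map g [0..<n]) + {#f x, f y#} = mset (map f [0..<n]) + {#g x, g y#}"
proof -
  define h where "h = (\<lambda>z. if z = x then g x else f z)"
  have 1: "mset (map h [0..<n]) + {#f x#} = mset (map f [0..<n]) + {#h x#}"
    by (rule mset_map_upd1[OF x]) (simp add: h_def)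
  have 2: "mset (map g [0..<n]) + {#h y#} = mset (map h [0..<n]) + {#g y#}"
    by (rule mset_map_upd1[OF y]) (use g in \<open>auto simp: h_def\<close>)
  have hx: "h x = g x" and hy: "h y = f y" using xy by (auto simp: h_def)
  have "mset (map g [0..<n]) + {#f x, f y#} = (mset (map g [0..<n]) + {#h y#}) + {#f x#}"
    using hy by (simp add: add_mset_commute)
  also have "\<dots> = (mset (map h [0..<n]) + {#f x#}) + {#g y#}" using 2 by (simp add: add_mset_commute)
  also have "\<dots> = mset (map f [0..<n]) + {#g x, g y#}" using 1 hx by (simp add: add_mset_commute)
  finally show ?thesis .
qed

lemma count_card: "count (mset xs) x = card {k. k < length xs \<and> x = xs ! k}"
  by (simp add: count_mset count_list_eq_length_filter length_filter_conv_card)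

lemma two_elems: "finite A \<Longrightarrow> card A \<ge> 2 \<Longrightarrow> \<exists>u v. u \<in> A \<and> v \<in> A \<and> u \<noteq> v"
proof -
  assume f: "finite A" and c: "card A \<ge> 2"
  have "0 < card A" using c by simp
  then have "A \<noteq> {}" using card_gt_0_iff by blast
  then obtain u where u: "u \<in> A" by blast
  have "0 < card (A - {u})" using c u f by simp
  then have "A - {u} \<noteq> {}" using card_gt_0_iff by blast
  then obtain v where "v \<in> A - {u}" by blast
  then show ?thesis using u by blast
qed

lemma two_vertices:
  assumes ms: "mset \<pi> = mset (map f [0..<n])" and l: "length \<pi> = n" and ij: "i < n" "j < n" "i \<noteq> j"
  shows "\<exists>u v. u < n \<and> v < n \<and> u \<noteq> v \<and> f u = \<pi> ! i \<and> f v = \<pi> ! j"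
proof (cases "\<pi> ! i = \<pi> ! j")
  case False
  have "\<pi> ! i \<in> set \<pi>" "\<pi> ! j \<in> set \<pi>" using ij l by auto
  then have "\<pi> ! i \<in> set (map f [0..<n])" "\<pi> ! j \<in> set (map f [0..<n])" using ms by (metis set_mset_mset)+
  then obtain u v where "u < n" "f u = \<pi> ! i" "v < n" "f v = \<pi> ! j" by auto
  then show ?thesis using False by metis
next
  case True
  define x where "x = \<pi> ! i"
  have "{i, j} \<subseteq> {k. k < length \<pi> \<and> x = \<pi> ! k}" using ij l True unfolding x_def by auto
  then have "card {i, j} \<le> card {k. k < length \<pi> \<and> x = \<pi> ! k}" by (intro card_mono) auto
  then have "2 \<le> count (mset \<pi>) x" using ij(3) by (simp add: count_card)
  then have "2 \<le> card {k. k < length (map f [0..<n]) \<and> x = map f [0..<n] ! k}"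
    using ms by (simp only: count_card[symmetric])
  moreover have "{k. k < length (map f [0..<n]) \<and> x = map f [0..<n] ! k} = {k. k < n \<and> x = f k}" by auto
  ultimately have "2 \<le> card {k. k < n \<and> x = f k}" by simp
  then obtain u v where "u \<in> {k. k < n \<and> x = f k}" "v \<in> {k. k < n \<and> x = f k}" "u \<noteq> v"
    using two_elems[of "{k. k < n \<and> x = f k}"] by auto
  then show ?thesis using True unfolding x_def by auto
qed

lemma one_vertex:
  assumes ms: "mset \<pi> = mset (map f [0..<n])" and l: "length \<pi> = n" and i: "i < n"
  shows "\<exists>u<n. f u = \<pi> ! i"
proof -
  have "\<pi> ! i \<in> set \<pi>" using i l by auto
  then have "\<pi> ! i \<in> set (map f [0..<n])" using ms by (metis set_mset_mset)
  then show ?thesis by auto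
qed

lemma pendant_degree_seq:
  assumes G: "G \<in> trees_with_seq \<pi>" and i: "i < length \<pi>"
    and u: "u < length \<pi>" "deg G u = \<pi> ! i"
    and srt: "sorted (rev (\<pi>[i := \<pi> ! i + 1] @ [1]))"
  shows "insert {u, length \<pi>} G \<in> trees_with_seq (\<pi>[i := \<pi> ! i + 1] @ [1])"
proof -
  define n where "n = length \<pi>"
  define H where "H = insert {u, n} G"
  have tG: "tree_on {..<n} G" and dG: "degree_seq n G = \<pi>"
    using G unfolding trees_with_seq_def is_tree_iff n_def by auto
  note H = attach_pendant[OF tG u(1)[folded n_def], folded H_def]
  have ms: "mset \<pi> = mset (map (deg G) [0..<n])" using degree_seq_tree(3)[OF tG] dG by simp
  have m1: "mset (map (deg H) [0..<n]) + {#deg G u#} = mset (map (deg G) [0..<n]) + {#deg H u#}"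
    by (rule mset_map_upd1) (use H(5) u n_def in auto)
  have m2: "mset (\<pi>[i := \<pi> ! i + 1]) + {#\<pi> ! i#} = mset \<pi> + {#\<pi> ! i + 1#}"
  proof -
    have "mset (\<pi>[i := \<pi> ! i + 1]) = add_mset (\<pi> ! i + 1) (mset \<pi> - {#\<pi> ! i#})"
      using i by (simp add: mset_update)
    moreover have "\<pi> ! i \<in># mset \<pi>" using i by simp
    ultimately show ?thesis by (simp add: insert_DiffM2)
  qed
  have "mset (map (deg H) [0..<n]) + {#\<pi> ! i#} = mset (\<pi>[i := \<pi> ! i + 1]) + {#\<pi> ! i#}"
    using m1 m2 ms u(2) H(3) by simp
  then have "mset (map (deg H) [0..<n]) = mset (\<pi>[i := \<pi> ! i + 1])" by simp
  then have "mset (\<pi>[i := \<pi> ! i + 1] @ [1]) = mset (map (deg H) [0..<Suc n])" using H(4) by simp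
  then have "degree_seq (Suc n) H = \<pi>[i := \<pi> ! i + 1] @ [1]" using degree_seq_eqI srt by blast
  then show ?thesis
    using H(1) unfolding trees_with_seq_def is_tree_iff H_def n_def by simp
qed

lemma transfer_degree_seq:
  assumes G: "G \<in> trees_with_seq \<pi>" and tH: "tree_on {..<length \<pi>} H"
    and ij: "i < length \<pi>" "j < length \<pi>" "i \<noteq> j"
    and uv: "u < length \<pi>" "v < length \<pi>" "u \<noteq> v" "deg G u = \<pi> ! i" "deg G v = \<pi> ! j"
    and same: "\<forall>z. z \<noteq> u \<longrightarrow> z \<noteq> v \<longrightarrow> deg H z = deg G z"
    and moved: "add_mset (deg H u) {#deg H v#} = add_mset (deg G u + 1) {#deg G v - 1#}"
    and srt: "sorted (rev (\<pi>[i := \<pi> ! i + 1, j := \<pi> ! j - 1]))"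
  shows "H \<in> trees_with_seq (\<pi>[i := \<pi> ! i + 1, j := \<pi> ! j - 1])"
proof -
  define n where "n = length \<pi>"
  define \<sigma> where "\<sigma> = \<pi>[i := \<pi> ! i + 1, j := \<pi> ! j - 1]"
  have tG: "tree_on {..<n} G" and dG: "degree_seq n G = \<pi>"
    using G unfolding trees_with_seq_def is_tree_iff n_def by auto
  have ms: "mset \<pi> = mset (map (deg G) [0..<n])" using degree_seq_tree(3)[OF tG] dG by simp
  have m1: "mset (map (deg H) [0..<n]) + {#deg G u, deg G v#}
      = mset (map (deg G) [0..<n]) + {#deg H u, deg H v#}"
    by (rule mset_map_upd2) (use uv same n_def in auto)
  have l2: "length \<sigma> = n" unfolding \<sigma>_def n_def by simp
  have m2: "mset (map (nth \<sigma>) [0..<n]) + {#\<pi> ! i, \<pi> ! j#}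
      = mset (map (nth \<pi>) [0..<n]) + {#\<sigma> ! i, \<sigma> ! j#}"
    by (rule mset_map_upd2) (use ij in \<open>auto simp: \<sigma>_def nth_list_update n_def\<close>)
  have "map (nth \<sigma>) [0..<n] = \<sigma>" using l2 by (metis map_nth)
  moreover have "map (nth \<pi>) [0..<n] = \<pi>" unfolding n_def by (metis map_nth)
  moreover have "\<sigma> ! i = \<pi> ! i + 1" "\<sigma> ! j = \<pi> ! j - 1" using ij unfolding \<sigma>_def by auto
  ultimately have m2': "mset \<sigma> + {#\<pi> ! i, \<pi> ! j#} = mset \<pi> + {#\<pi> ! i + 1, \<pi> ! j - 1#}"
    using m2 by simp
  have "mset (map (deg H) [0..<n]) + {#\<pi> ! i, \<pi> ! j#} = mset \<pi> + {#\<pi> ! i + 1, \<pi> ! j - 1#}"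
    using m1 moved uv(4,5) ms by simp
  then have "mset \<sigma> + {#\<pi> ! i, \<pi> ! j#} = mset (map (deg H) [0..<n]) + {#\<pi> ! i, \<pi> ! j#}"
    using m2' by simp
  then have "mset \<sigma> = mset (map (deg H) [0..<n])" using add_right_cancel by blast
  then have "degree_seq n H = \<sigma>" using degree_seq_eqI srt unfolding \<sigma>_def by blast
  then show ?thesis using tH l2 unfolding trees_with_seq_def is_tree_iff \<sigma>_def n_def by simp
qed

section \<open>Combinatorics of the order \<lhd>\<close>

definition psum :: "nat list \<Rightarrow> nat \<Rightarrow> nat" where
  "psum xs j = (\<Sum>i\<le>j. xs ! i)"

lemma psum_0[simp]: "psum xs 0 = xs ! 0" unfolding psum_def by simp
lemma psum_Suc: "psum xs (Suc j) = psum xs j + xs ! Suc j" unfolding psum_def by simp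

lemma psum_sum_list: "length xs = Suc m \<Longrightarrow> psum xs m = sum_list xs"
proof -
  assume l: "length xs = Suc m"
  have "{..m} = {0..<Suc m}" by auto
  then show ?thesis unfolding psum_def using l by (simp add: sum_list_sum_nth)
qed

lemma psum_append: "j < length xs \<Longrightarrow> psum (xs @ ys) j = psum xs j"
  by (induction j) (auto simp: psum_Suc nth_append)

lemma psum_update:
  assumes "i < length xs" "j < length xs"
  shows "psum (xs[i := x]) j + (if i \<le> j then xs ! i else 0) = psum xs j + (if i \<le> j then x else 0)"
  using assms(2)
proof (induction j)
  case 0 then show ?case using assms(1) by (cases i) auto
next
  case (Suc j)
  then have IH: "psum (xs[i := x]) j + (if i \<le> j then xs ! i else 0) = psum xs j + (if i \<le> j then x else 0)" by simp
  show ?case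
  proof (cases "i = Suc j")
    case True
    then have "\<not> i \<le> j" by simp
    then show ?thesis using IH True Suc(2) by (simp add: psum_Suc)
  next
    case False
    then have "(i \<le> Suc j) = (i \<le> j)" by auto
    then show ?thesis using IH False Suc(2) by (simp add: psum_Suc)
  qed
qed

lemma psum_eq_imp_eq:
  assumes l: "length a = length b" and eq: "\<forall>k<length a. psum a k = psum b k"
  shows "a = b"
proof (rule nth_equalityI)
  fix k assume k: "k < length a"
  show "a ! k = b ! k"
  proof (cases k)
    case 0 then show ?thesis using eq k by (metis psum_0)
  next
    case (Suc g)
    then have "psum a g = psum b g" "psum a (Suc g) = psum b (Suc g)" using eq k by auto
    then show ?thesis using Suc by (simp add: psum_Suc)
  qed
qed (use l in simp)

lemma psum_eq_prev_le:
  assumes "psum a h = psum b h" "\<forall>k<h. psum a k \<le> psum b k"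
  shows "b ! h \<le> a ! h"
proof (cases h)
  case 0 then show ?thesis using assms by simp
next
  case (Suc g) then show ?thesis using assms by (auto simp: psum_Suc)
qed

lemma descent_after_equal_prefix:
  assumes s': "sorted (rev \<pi>')" and h: "Suc h < length \<pi>'"
    and eq: "psum \<pi> h = psum \<pi>' h" and lt: "psum \<pi> (Suc h) < psum \<pi>' (Suc h)"
    and maj: "\<forall>k<h. psum \<pi> k \<le> psum \<pi>' k"
  shows "\<pi> ! Suc h < \<pi> ! h"
proof -
  have "\<pi> ! Suc h < \<pi>' ! Suc h" using eq lt by (simp add: psum_Suc)
  also have "\<pi>' ! Suc h \<le> \<pi>' ! h" using sorted_rev_nth_mono[OF s'] h by simp
  also have "\<pi>' ! h \<le> \<pi> ! h" using psum_eq_prev_le[OF eq maj] .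
  finally show ?thesis .
qed

lemma prefix_average_ge:
  assumes s: "sorted (rev xs)" and m: "1 \<le> m" "m \<le> length xs"
  shows "m * sum_list xs \<le> length xs * psum xs (m - 1)"
proof -
  define N where "N = length xs"
  define d where "d = (\<lambda>k. xs ! k)"
  define P where "P = (\<Sum>k<m. d k)"
  define R where "R = (\<Sum>l\<in>{m..<N}. d l)"
  have "{..m-1} = {..<m}" using m by auto
  then have SP: "psum xs (m - 1) = P" unfolding psum_def P_def d_def by simp
  have "sum_list xs = (\<Sum>k\<in>{0..<N}. d k)" unfolding N_def d_def by (simp add: sum_list_sum_nth)
  also have "\<dots> = (\<Sum>k\<in>{0..<m}. d k) + (\<Sum>k\<in>{m..<N}. d k)"
    using m unfolding N_def by (simp add: sum.atLeastLessThan_concat)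
  finally have T: "sum_list xs = P + R" unfolding P_def R_def by (simp add: atLeast0LessThan)
  have "(\<Sum>k<m. \<Sum>l\<in>{m..<N}. d l) \<le> (\<Sum>k<m. \<Sum>l\<in>{m..<N}. d k)"
  proof (rule sum_mono)+
    fix k l assume "k \<in> {..<m}" "l \<in> {m..<N}"
    then have "k \<le> l" "l < length xs" unfolding N_def by auto
    then show "d l \<le> d k" unfolding d_def using sorted_rev_nth_mono[OF s] by blast
  qed
  then have "m * R \<le> (N - m) * P" unfolding R_def P_def by (simp add: sum_distrib_left mult.commute)
  moreover have "N * P = m * P + (N - m) * P" using m unfolding N_def by (simp add: add_mult_distrib[symmetric])
  ultimately have "m * (P + R) \<le> N * P" by (simp add: add_mult_distrib2)
  then show ?thesis using T SP unfolding N_def by simp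
qed

text \<open>In a tree sequence a proper prefix of length m sums to at least 2m - 1
  (m vertices of a tree span at most m - 1 edges).\<close>
lemma tree_seq_prefix_lower:
  assumes s: "sorted (rev \<pi>)" and sum: "sum_list \<pi> = 2 * (length \<pi> - 1)"
    and m: "1 \<le> m" "m < length \<pi>"
  shows "2 * m \<le> psum \<pi> (m - 1) + 1"
proof (rule ccontr)
  assume "\<not> ?thesis"
  then have P: "psum \<pi> (m - 1) \<le> 2 * (m - 1)" by simp
  obtain a b where ab: "m = Suc a" "length \<pi> = Suc b" "a < b" using m by (cases m; cases "length \<pi>") auto
  have "m * sum_list \<pi> \<le> length \<pi> * psum \<pi> (m - 1)" using prefix_average_ge[OF s] m by simp
  then have "Suc a * (2 * b) \<le> Suc b * psum \<pi> a" using ab sum by simp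
  also have "\<dots> \<le> Suc b * (2 * a)" using P ab by (intro mult_le_mono2) simp
  finally show False using ab(3) by (simp add: algebra_simps)
qed

lemma sorted_rev_incr:
  fixes xs :: "nat list"
  assumes s: "sorted (rev xs)" and i: "i < length xs" and d: "\<forall>h. i = Suc h \<longrightarrow> xs ! i < xs ! h"
  shows "sorted (rev (xs[i := xs ! i + 1]))"
  unfolding sorted_rev_iff_nth_Suc
proof (intro allI impI)
  fix k assume k: "Suc k < length (xs[i := xs ! i + 1])"
  have sk: "xs ! Suc k \<le> xs ! k" using sorted_rev_nth_mono[OF s, of k "Suc k"] k by simp
  show "xs[i := xs ! i + 1] ! Suc k \<le> xs[i := xs ! i + 1] ! k"
  proof (cases "Suc k = i")
    case True
    then have "xs ! i < xs ! k" using d by blast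
    then have "xs ! i + 1 \<le> xs ! k" by simp
    then show ?thesis using True k by (simp add: nth_list_update)
  next
    case False then show ?thesis
      using sk k by (cases "k = i") (simp_all add: nth_list_update trans_le_add1)
  qed
qed

lemma sorted_rev_decr:
  fixes xs :: "nat list"
  assumes s: "sorted (rev xs)" and d: "Suc j < length xs \<longrightarrow> xs ! Suc j < xs ! j"
  shows "sorted (rev (xs[j := xs ! j - 1]))"
  unfolding sorted_rev_iff_nth_Suc
proof (intro allI impI)
  fix k assume k: "Suc k < length (xs[j := xs ! j - 1])"
  have sk: "xs ! Suc k \<le> xs ! k" using sorted_rev_nth_mono[OF s, of k "Suc k"] k by simp
  show "xs[j := xs ! j - 1] ! Suc k \<le> xs[j := xs ! j - 1] ! k"
  proof (cases "k = j")
    case True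
    then have "xs ! Suc j < xs ! j" using d k by simp
    then have "xs ! Suc j \<le> xs ! j - 1" by simp
    then show ?thesis using True k by (simp add: nth_list_update)
  next
    case False then show ?thesis
      using sk k by (cases "Suc k = j") (auto simp: nth_list_update)
  qed
qed

text \<open>Case length \<pi> < length \<pi>': raising the first entry after which all prefix sums
  are strictly dominated, and appending a 1, stays \<lhd> \<pi>'.\<close>
lemma pendant_combinatorics:
  assumes s: "sorted (rev \<pi>)" and s': "sorted (rev \<pi>')" and l: "length \<pi> = n" and l': "length \<pi>' = n'"
    and nn: "n < n'" and n1: "n \<ge> 1" and sum: "sum_list \<pi> = 2 * (n - 1)" and sum': "sum_list \<pi>' = 2 * (n' - 1)"
    and pos: "n \<ge> 2 \<Longrightarrow> \<forall>x\<in>set \<pi>. 1 \<le> x" and maj: "\<forall>k<n. psum \<pi> k \<le> psum \<pi>' k"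
  shows "\<exists>i<n. sorted (rev (\<pi>[i := \<pi> ! i + 1] @ [1])) \<and> (\<forall>k<Suc n. psum (\<pi>[i := \<pi> ! i + 1] @ [1]) k \<le> psum \<pi>' k)"
proof -
  obtain a where a: "n = Suc a" using n1 by (cases n) auto
  have pa: "psum \<pi> a = 2 * a" using psum_sum_list[of \<pi> a] l a sum by simp
  have last: "psum \<pi> a < psum \<pi>' a"
    using tree_seq_prefix_lower[OF s' _, of n] sum' l' nn a pa by simp
  have next_: "2 * n \<le> psum \<pi>' n"
  proof (cases "Suc n < n'")
    case True then show ?thesis using tree_seq_prefix_lower[OF s' _, of "Suc n"] sum' l' by simp
  next
    case False then show ?thesis using psum_sum_list[of \<pi>' n] sum' l' nn by simp
  qed
  define Q where "Q = (\<lambda>i. \<forall>k. i \<le> k \<and> k < n \<longrightarrow> psum \<pi> k < psum \<pi>' k)"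
  have Qa: "Q a" unfolding Q_def using last a by (metis le_antisym less_Suc_eq_le)
  define i where "i = (LEAST i. Q i)"
  have Qi: "Q i" unfolding i_def using Qa by (rule LeastI)
  have ia: "i \<le> a" unfolding i_def using Qa by (rule Least_le)
  have drop: "\<pi> ! i < \<pi> ! h" if ih: "i = Suc h" for h
  proof -
    have "\<not> Q h" using ih not_less_Least[of h Q] unfolding i_def by simp
    then obtain k where k: "h \<le> k" "k < n" "\<not> psum \<pi> k < psum \<pi>' k" unfolding Q_def by blast
    have "k = h" using Qi k ih unfolding Q_def by (metis Suc_leI le_neq_implies_less)
    then have eqh: "psum \<pi> h = psum \<pi>' h" using k maj by (meson le_neq_implies_less not_less)
    have "psum \<pi> (Suc h) < psum \<pi>' (Suc h)" using Qi ih ia a unfolding Q_def by auto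
    then show ?thesis using descent_after_equal_prefix[OF s' _ eqh] maj ih ia a l' nn by auto
  qed
  define \<pi>2 where "\<pi>2 = \<pi>[i := \<pi> ! i + 1]"
  have l2: "length \<pi>2 = n" unfolding \<pi>2_def using l by simp
  have Sp2: "psum \<pi>2 k = psum \<pi> k + (if i \<le> k then 1 else 0)" if "k < n" for k
    using psum_update[of i \<pi> k "\<pi> ! i + 1"] that l ia a unfolding \<pi>2_def by auto
  have "sorted (rev \<pi>2)" unfolding \<pi>2_def using sorted_rev_incr[OF s] drop ia a l by simp
  moreover have "\<forall>x\<in>set \<pi>2. 1 \<le> x"
  proof
    fix x assume "x \<in> set \<pi>2"
    then obtain k where k: "k < n" "x = \<pi>2 ! k" using l2 by (metis in_set_conv_nth)
    show "1 \<le> x"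
    proof (cases "k = i")
      case False
      then have "n \<ge> 2" using k ia a by linarith
      then show ?thesis using pos k l False unfolding \<pi>2_def by simp
    qed (use k l ia a in \<open>simp add: \<pi>2_def\<close>)
  qed
  ultimately have sorted2: "sorted (rev (\<pi>2 @ [1]))" by simp
  have maj2: "psum (\<pi>2 @ [1]) k \<le> psum \<pi>' k" if k: "k < Suc n" for k
  proof (cases "k = n")
    case True
    have "psum (\<pi>2 @ [1]) n = psum \<pi>2 a + 1" using l2 a by (simp add: psum_Suc psum_append nth_append)
    also have "\<dots> = 2 * n" using Sp2[of a] a ia pa by simp
    finally show ?thesis using True next_ by simp
  next
    case False
    then have kn: "k < n" using k by simp
    have "psum (\<pi>2 @ [1]) k = psum \<pi> k + (if i \<le> k then 1 else 0)" using psum_append l2 kn Sp2 by simp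
    then show ?thesis using Qi kn maj unfolding Q_def by (auto simp: Suc_le_eq)
  qed
  have "i < n" using ia a by simp
  then show ?thesis using sorted2 maj2 unfolding \<pi>2_def by blast
qed

text \<open>Case length \<pi> = length \<pi>', \<pi> \<noteq> \<pi>': let i be the first position where the prefix
  sums differ and j > i the next position where they agree again.\<close>
lemma transfer_positions:
  assumes s: "sorted (rev \<pi>)" and s': "sorted (rev \<pi>')" and l: "length \<pi> = n" and l': "length \<pi>' = n"
    and ne: "\<pi> \<noteq> \<pi>'" and sum: "sum_list \<pi> = sum_list \<pi>'"
    and pos': "n \<ge> 2 \<Longrightarrow> \<forall>x\<in>set \<pi>'. 1 \<le> x" and maj: "\<forall>k<n. psum \<pi> k \<le> psum \<pi>' k"
  shows "\<exists>i j. i < j \<and> j < n \<and> (\<forall>h. i = Suc h \<longrightarrow> \<pi> ! i < \<pi> ! h)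
     \<and> (\<forall>k. i \<le> k \<and> k < j \<longrightarrow> psum \<pi> k < psum \<pi>' k) \<and> psum \<pi> j = psum \<pi>' j
     \<and> 2 \<le> \<pi> ! j \<and> (Suc j < n \<longrightarrow> \<pi> ! Suc j < \<pi> ! j)"
proof -
  obtain k where k: "k < n" "psum \<pi> k \<noteq> psum \<pi>' k" using psum_eq_imp_eq[of \<pi> \<pi>'] l l' ne by auto
  then have "psum \<pi> k < psum \<pi>' k" using maj by (simp add: order.not_eq_order_implies_strict)
  then have ex: "\<exists>k. k < n \<and> psum \<pi> k < psum \<pi>' k" using k(1) by blast
  then obtain a where a: "n = Suc a" by (cases n) auto
  have lastq: "psum \<pi> a = psum \<pi>' a" using psum_sum_list[of \<pi> a] psum_sum_list[of \<pi>' a] l l' a sum by simp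
  define R where "R = (\<lambda>i. i < n \<and> psum \<pi> i < psum \<pi>' i)"
  define i where "i = (LEAST i. R i)"
  have Ri: "R i" unfolding i_def using ex LeastI_ex[of R] unfolding R_def by blast
  then have ia: "i < a" using lastq a unfolding R_def by (metis less_SucE less_irrefl)
  have before: "psum \<pi> k = psum \<pi>' k" if "k < i" for k
  proof -
    have "\<not> R k" using not_less_Least[of k R] that unfolding i_def by simp
    moreover have kn: "k < n" using that ia a by simp
    ultimately have "\<not> psum \<pi> k < psum \<pi>' k" unfolding R_def by simp
    then show ?thesis using maj[rule_format, OF kn] by simp
  qed
  define T where "T = (\<lambda>j. i < j \<and> j < n \<and> psum \<pi> j = psum \<pi>' j)"
  have Ta: "T a" unfolding T_def using ia a lastq by simp
  define j where "j = (LEAST j. T j)"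
  have Tj: "T j" unfolding j_def using Ta by (rule LeastI)
  then have ij: "i < j" "j < n" and eqj: "psum \<pi> j = psum \<pi>' j" unfolding T_def by auto
  have between: "psum \<pi> k < psum \<pi>' k" if "i \<le> k" "k < j" for k
  proof (cases "k = i")
    case True then show ?thesis using Ri unfolding R_def by simp
  next
    case False
    have "\<not> T k" using not_less_Least[of k T] that unfolding j_def by simp
    then have "psum \<pi> k \<noteq> psum \<pi>' k" using that False ij unfolding T_def by auto
    moreover have "k < n" using that ij by simp
    ultimately show ?thesis using maj by (simp add: order.not_eq_order_implies_strict)
  qed
  have drop: "\<pi> ! i < \<pi> ! h" if ih: "i = Suc h" for h
    using descent_after_equal_prefix[OF s', of h \<pi>] before[of h] Ri maj ih ia a l'
    unfolding R_def by simp
  obtain h' where h': "j = Suc h'" using ij by (cases j) auto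
  have "psum \<pi> h' < psum \<pi>' h'" using between[of h'] h' ij by simp
  then have jbig: "\<pi>' ! j < \<pi> ! j" using eqj h' by (simp add: psum_Suc)
  have "1 \<le> \<pi>' ! j" using pos' ij l' by simp
  then have j2: "2 \<le> \<pi> ! j" using jbig by simp
  have "\<pi> ! Suc j < \<pi> ! j" if "Suc j < n"
  proof -
    have "\<pi> ! Suc j \<le> \<pi>' ! Suc j" using eqj maj that by (auto simp: psum_Suc)
    also have "\<dots> \<le> \<pi>' ! j" using sorted_rev_nth_mono[OF s'] that l' by simp
    finally show ?thesis using jbig by simp
  qed
  then show ?thesis using ij drop between eqj j2 by blast
qed

definition deficit :: "nat list \<Rightarrow> nat list \<Rightarrow> nat" where
  "deficit \<pi>' \<pi> = (\<Sum>k<length \<pi>. psum \<pi>' k - psum \<pi> k)"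

lemma transfer_combinatorics:
  assumes s: "sorted (rev \<pi>)" and s': "sorted (rev \<pi>')" and l: "length \<pi> = n" and l': "length \<pi>' = n"
    and ne: "\<pi> \<noteq> \<pi>'" and sum: "sum_list \<pi> = sum_list \<pi>'"
    and pos': "n \<ge> 2 \<Longrightarrow> \<forall>x\<in>set \<pi>'. 1 \<le> x" and maj: "\<forall>k<n. psum \<pi> k \<le> psum \<pi>' k"
  shows "\<exists>i j. i < j \<and> j < n \<and> 2 \<le> \<pi> ! j \<and> sorted (rev (\<pi>[i := \<pi> ! i + 1, j := \<pi> ! j - 1]))
     \<and> (\<forall>k<n. psum (\<pi>[i := \<pi> ! i + 1, j := \<pi> ! j - 1]) k \<le> psum \<pi>' k)
     \<and> deficit \<pi>' (\<pi>[i := \<pi> ! i + 1, j := \<pi> ! j - 1]) < deficit \<pi>' \<pi>"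
proof -
  obtain i j where ij: "i < j" "j < n" and drop: "\<forall>h. i = Suc h \<longrightarrow> \<pi> ! i < \<pi> ! h"
    and between: "\<forall>k. i \<le> k \<and> k < j \<longrightarrow> psum \<pi> k < psum \<pi>' k"
    and j2: "2 \<le> \<pi> ! j" and dj: "Suc j < n \<longrightarrow> \<pi> ! Suc j < \<pi> ! j"
    using transfer_positions[OF assms] by blast
  define \<pi>1 where "\<pi>1 = \<pi>[i := \<pi> ! i + 1]"
  define \<pi>2 where "\<pi>2 = \<pi>1[j := \<pi> ! j - 1]"
  have l1: "length \<pi>1 = n" and l2: "length \<pi>2 = n" unfolding \<pi>2_def \<pi>1_def using l by simp_all
  have p1: "\<pi>1 ! j = \<pi> ! j" "\<pi>1 ! Suc j = \<pi> ! Suc j" unfolding \<pi>1_def using ij by simp_all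
  have "sorted (rev \<pi>1)" unfolding \<pi>1_def using sorted_rev_incr[OF s] drop ij l by simp
  then have sorted2: "sorted (rev \<pi>2)"
    unfolding \<pi>2_def using sorted_rev_decr[of \<pi>1 j] p1 dj l1 by simp
  have Sp1: "psum \<pi>1 k = psum \<pi> k + (if i \<le> k then 1 else 0)" if "k < n" for k
    using psum_update[of i \<pi> k "\<pi> ! i + 1"] that l ij unfolding \<pi>1_def by auto
  have Sp2: "psum \<pi>2 k + (if j \<le> k then 1 else 0) = psum \<pi> k + (if i \<le> k then 1 else 0)" if "k < n" for k
  proof -
    have "psum \<pi>2 k + (if j \<le> k then \<pi>1 ! j else 0) = psum \<pi>1 k + (if j \<le> k then \<pi> ! j - 1 else 0)"
      using psum_update[of j \<pi>1 k "\<pi> ! j - 1"] that l1 ij unfolding \<pi>2_def by auto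
    then show ?thesis using Sp1[OF that] p1 j2 by (auto split: if_splits)
  qed
  have maj2: "\<forall>k<n. psum \<pi>2 k \<le> psum \<pi>' k"
  proof (intro allI impI)
    fix k assume k: "k < n"
    show "psum \<pi>2 k \<le> psum \<pi>' k"
    proof (cases "i \<le> k \<and> k < j")
      case True then show ?thesis using Sp2[OF k] between by fastforce
    next
      case False
      then have "(i \<le> k) = (j \<le> k)" using ij by auto
      then show ?thesis using Sp2[OF k] maj k by simp
    qed
  qed
  have ge: "psum \<pi> k \<le> psum \<pi>2 k" if "k < n" for k using Sp2[OF that] ij by (auto split: if_splits)
  have "deficit \<pi>' \<pi>2 < deficit \<pi>' \<pi>"
    unfolding deficit_def l l2
  proof (rule sum_strict_mono_ex1)
    show "\<forall>k\<in>{..<n}. psum \<pi>' k - psum \<pi>2 k \<le> psum \<pi>' k - psum \<pi> k"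
      using ge by (simp add: diff_le_mono2)
    have "psum \<pi>2 i = psum \<pi> i + 1" using Sp2[of i] ij by simp
    moreover have "psum \<pi> i < psum \<pi>' i" using between ij by simp
    ultimately have "psum \<pi>' i - psum \<pi>2 i < psum \<pi>' i - psum \<pi> i" by simp
    then show "\<exists>k\<in>{..<n}. psum \<pi>' k - psum \<pi>2 k < psum \<pi>' k - psum \<pi> k"
      using ij by auto
  qed simp
  then show ?thesis using ij j2 sorted2 maj2 unfolding \<pi>2_def \<pi>1_def by blast
qed

lemma tree_sequence_props:
  assumes "tree_sequence \<pi>"
  shows "sorted (rev \<pi>)" and "sum_list \<pi> = 2 * (length \<pi> - 1)"
    and "length \<pi> \<ge> 2 \<Longrightarrow> \<forall>x\<in>set \<pi>. 1 \<le> x"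
proof -
  obtain E where t: "tree_on {..<length \<pi>} E" and d: "degree_seq (length \<pi>) E = \<pi>"
    using assms unfolding tree_sequence_def is_tree_iff by blast
  show "sorted (rev \<pi>)" "sum_list \<pi> = 2 * (length \<pi> - 1)"
    using degree_seq_tree(2,4)[OF t] d by simp_all
  show "length \<pi> \<ge> 2 \<Longrightarrow> \<forall>x\<in>set \<pi>. 1 \<le> x" using degree_seq_tree(5)[OF t] d by simp
qed

lemma majorized_psum: "majorized \<pi> \<pi>' \<longleftrightarrow> length \<pi> \<le> length \<pi>' \<and> (\<forall>k<length \<pi>. psum \<pi> k \<le> psum \<pi>' k)"
  unfolding majorized_def psum_def ..

lemma pendant_improvement:
  assumes G: "G \<in> trees_with_seq \<pi>" and T': "tree_sequence \<pi>'"
    and mj: "majorized \<pi> \<pi>'" and lt: "length \<pi> < length \<pi>'"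
  shows "\<exists>\<sigma> H. H \<in> trees_with_seq \<sigma> \<and> majorized \<sigma> \<pi>' \<and> length \<sigma> = Suc (length \<pi>)
     \<and> lambda_max (length \<pi>) G < lambda_max (length \<sigma>) H"
proof -
  define n where "n = length \<pi>"
  have tG: "tree_on {..<n} G" and dG: "degree_seq n G = \<pi>"
    using G unfolding trees_with_seq_def is_tree_iff n_def by auto
  note P = degree_seq_tree[OF tG, unfolded dG] and P' = tree_sequence_props[OF T']
  obtain i where i: "i < n" and srt: "sorted (rev (\<pi>[i := \<pi> ! i + 1] @ [1]))"
    and mj2: "\<forall>k<Suc n. psum (\<pi>[i := \<pi> ! i + 1] @ [1]) k \<le> psum \<pi>' k"
    using pendant_combinatorics[OF P(2) P'(1) n_def[symmetric] refl _ P(6) P(4) P'(2) P(5)] lt mj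
    unfolding majorized_psum n_def by blast
  obtain u where u: "u < n" "deg G u = \<pi> ! i" using one_vertex[OF P(3) _ i] n_def by blast
  define \<sigma> where "\<sigma> = \<pi>[i := \<pi> ! i + 1] @ [1]"
  have "insert {u, n} G \<in> trees_with_seq \<sigma>"
    using pendant_degree_seq[OF G _ _ _ srt] i u unfolding \<sigma>_def n_def by blast
  moreover have "length \<sigma> = Suc n" unfolding \<sigma>_def n_def by simp
  moreover have "majorized \<sigma> \<pi>'" using mj2 lt \<open>length \<sigma> = Suc n\<close>
    unfolding majorized_psum \<sigma>_def n_def by simp
  moreover have "lambda_max n G < lambda_max (Suc n) (insert {u, n} G)" using pendant_step[OF tG u(1)] .
  ultimately show ?thesis unfolding n_def by metis
qed

lemma transfer_improvement:
  assumes G: "G \<in> trees_with_seq \<pi>" and T': "tree_sequence \<pi>'"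
    and mj: "majorized \<pi> \<pi>'" and eq: "length \<pi> = length \<pi>'" and ne: "\<pi> \<noteq> \<pi>'"
  shows "\<exists>\<sigma> H. H \<in> trees_with_seq \<sigma> \<and> majorized \<sigma> \<pi>' \<and> length \<sigma> = length \<pi>
     \<and> deficit \<pi>' \<sigma> < deficit \<pi>' \<pi> \<and> lambda_max (length \<pi>) G < lambda_max (length \<sigma>) H"
proof -
  define n where "n = length \<pi>"
  have tG: "tree_on {..<n} G" and dG: "degree_seq n G = \<pi>"
    using G unfolding trees_with_seq_def is_tree_iff n_def by auto
  note P = degree_seq_tree[OF tG, unfolded dG] and P' = tree_sequence_props[OF T']
  obtain i j where ij: "i < j" "j < n" "2 \<le> \<pi> ! j"
    and srt: "sorted (rev (\<pi>[i := \<pi> ! i + 1, j := \<pi> ! j - 1]))"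
    and mj2: "\<forall>k<n. psum (\<pi>[i := \<pi> ! i + 1, j := \<pi> ! j - 1]) k \<le> psum \<pi>' k"
    and gap: "deficit \<pi>' (\<pi>[i := \<pi> ! i + 1, j := \<pi> ! j - 1]) < deficit \<pi>' \<pi>"
    using transfer_combinatorics[OF P(2) P'(1) n_def[symmetric] _ ne] P(4) P'(2,3) eq mj
    unfolding majorized_psum n_def by auto
  have "i < n" "i \<noteq> j" using ij by simp_all
  then obtain u v where uv: "u < n" "v < n" "u \<noteq> v" "deg G u = \<pi> ! i" "deg G v = \<pi> ! j"
    using two_vertices[OF P(3) n_def[symmetric] _ ij(2)] by blast
  have "\<pi> ! j \<le> \<pi> ! i" using sorted_rev_nth_mono[OF P(2), of i j] ij n_def by simp
  then obtain H where H: "tree_on {..<n} H" "lambda_max n G < lambda_max n H"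
    "\<forall>z. z \<noteq> u \<longrightarrow> z \<noteq> v \<longrightarrow> deg H z = deg G z"
    "add_mset (deg H u) {#deg H v#} = add_mset (deg G u + 1) {#deg G v - 1#}"
    using transfer_step[OF tG uv(1,2,3)] uv(4,5) ij(3) by auto
  define \<sigma> where "\<sigma> = \<pi>[i := \<pi> ! i + 1, j := \<pi> ! j - 1]"
  have "H \<in> trees_with_seq \<sigma>"
    using transfer_degree_seq[OF G _ _ _ _ _ _ _ _ _ H(3,4) srt] H(1) ij uv
    unfolding \<sigma>_def n_def by simp
  moreover have "length \<sigma> = n" unfolding \<sigma>_def n_def by simp
  moreover have "majorized \<sigma> \<pi>'" using mj2 eq unfolding majorized_psum \<sigma>_def n_def by simp
  ultimately show ?thesis using H(2) gap unfolding \<sigma>_def n_def by metis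
qed

text \<open>Induction on the lexicographically ordered pair
  (length \<pi>' - length \<pi>, deficit \<pi>' \<pi>), which each improvement step decreases.\<close>
lemma dominated_improvement:
  assumes T': "tree_sequence \<pi>'"
  shows "G \<in> trees_with_seq \<pi> \<Longrightarrow> majorized \<pi> \<pi>' \<Longrightarrow> \<pi> \<noteq> \<pi>' \<Longrightarrow>
    \<exists>H\<in>trees_with_seq \<pi>'. lambda_max (length \<pi>) G < lambda_max (length \<pi>') H"
proof (induction "(length \<pi>' - length \<pi>, deficit \<pi>' \<pi>)" arbitrary: \<pi> G
    rule: wf_induct_rule[OF wf_lex_prod[OF wf_less wf_less]])
  case (1 \<pi> G)
  obtain \<sigma> H where H: "H \<in> trees_with_seq \<sigma>" "majorized \<sigma> \<pi>'"
    and lam: "lambda_max (length \<pi>) G < lambda_max (length \<sigma>) H"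
    and dec: "((length \<pi>' - length \<sigma>, deficit \<pi>' \<sigma>), (length \<pi>' - length \<pi>, deficit \<pi>' \<pi>))
               \<in> less_than <*lex*> less_than"
  proof (cases "length \<pi> < length \<pi>'")
    case True
    then show ?thesis using pendant_improvement[OF "1.prems"(1) T' "1.prems"(2)] that by fastforce
  next
    case False
    then have "length \<pi> = length \<pi>'" using "1.prems"(2) unfolding majorized_def by simp
    then show ?thesis
      using transfer_improvement[OF "1.prems"(1) T' "1.prems"(2) _ "1.prems"(3)] that by fastforce
  qed
  show ?case
  proof (cases "\<sigma> = \<pi>'")
    case True then show ?thesis using H(1) lam by blast
  next
    case False
    then obtain H' where "H' \<in> trees_with_seq \<pi>'" "lambda_max (length \<sigma>) H < lambda_max (length \<pi>') H'"
      using "1.hyps"[OF _ H(1,2)] dec by auto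
    then show ?thesis using lam by force
  qed
qed

theorem theorem2:
  fixes \<pi> \<pi>' :: "nat list" and G G' :: "nat set set"
  assumes "tree_sequence \<pi>" and "tree_sequence \<pi>'"
    and "\<pi> \<noteq> \<pi>'"
    and "majorized \<pi> \<pi>'"
    and "extremal \<pi> G" and "extremal \<pi>' G'"
  shows "lambda_max (length \<pi>) G < lambda_max (length \<pi>') G'"
proof -
  have "G \<in> trees_with_seq \<pi>" using assms(5) unfolding extremal_def by blast
  then obtain H where H: "H \<in> trees_with_seq \<pi>'" "lambda_max (length \<pi>) G < lambda_max (length \<pi>') H"
    using dominated_improvement[OF assms(2) _ assms(4,3)] by blast
  have "lambda_max (length \<pi>') H \<le> lambda_max (length \<pi>') G'" using assms(6) H(1) unfolding extremal_def by blast
  then show ?thesis using H(2) by simp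
qed

end
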